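(* With $F\le G$ meaning that $G-F$ has all coefficients non-negative, we have $$J_1[0,1,0,0,0]\le J_1[0,0,1,0,0]\le J_1[0,0,0,1,0]\le J_1[0,0,0,0,1],$$ and consequently also $[0,1,0,0,0]\le[0,0,1,0,0]\le[0,0,0,1,0]\le[0,0,0,0,1]$.
   Context: $(x;q)_\infty=\prod_{i\ge0}(1-xq^i)$; $J_{a,m}:=(q^a;q^m)_\infty(q^{m-a};q^m)_\infty(q^m;q^m)_\infty$, $J_m:=(q^m;q^m)_\infty$, $P_i:=J_{i,11}$. $[c_1,c_2,c_3,c_4,c_5]:=\frac{J_{11}^2}{J_1^3}\big(c_1P_5^2P_4+c_2q^2P_1^2P_3+c_3qP_4^2P_1+c_4qP_2^2P_5+c_5qP_3^2P_2\big)$. *)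

theory Defs
  imports "HOL-Computational_Algebra.Formal_Power_Series"
begin

text \<open>Infinite q-Pochhammer symbol (q^a; q^m)_infinity as a formal power series in q.
  The n-th coefficient is taken from the finite product over i \<le> n; for a \<ge> 1 the
  remaining factors 1 - q^(a+m*i) with i > n do not affect coefficients of degree \<le> n,
  so this is exactly the coefficient of the infinite product.\<close>
definition qpoch :: "nat \<Rightarrow> nat \<Rightarrow> real fps" where
  "qpoch a m = Abs_fps (\<lambda>n. fps_nth (\<Prod>i\<le>n. 1 - fps_X ^ (a + m * i)) n)"

definition Jam :: "nat \<Rightarrow> nat \<Rightarrow> real fps" where
  "Jam a m = qpoch a m * qpoch (m - a) m * qpoch m m"

definition Jm :: "nat \<Rightarrow> real fps" where
  "Jm m = qpoch m m"

definition Pq :: "nat \<Rightarrow> real fps" where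
  "Pq i = Jam i 11"

definition bracket :: "real \<Rightarrow> real \<Rightarrow> real \<Rightarrow> real \<Rightarrow> real \<Rightarrow> real fps" where
  "bracket c1 c2 c3 c4 c5 =
     Jm 11 ^ 2 * inverse (Jm 1 ^ 3) *
     (fps_const c1 * Pq 5 ^ 2 * Pq 4
      + fps_const c2 * fps_X ^ 2 * Pq 1 ^ 2 * Pq 3
      + fps_const c3 * fps_X * Pq 4 ^ 2 * Pq 1
      + fps_const c4 * fps_X * Pq 2 ^ 2 * Pq 5
      + fps_const c5 * fps_X * Pq 3 ^ 2 * Pq 2)"

definition fps_coeff_le :: "real fps \<Rightarrow> real fps \<Rightarrow> bool" where
  "fps_coeff_le F G \<longleftrightarrow> (\<forall>n. fps_nth (G - F) n \<ge> 0)"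

end

(*
  By the Jacobi triple product each P_a = J_{a,11} is the theta series
  sum_k (-1)^k q^(11 k(k-1)/2 + a k), so a product of four of them is a signed sum over Z^4 with
  a quadratic exponent.  Splitting Z^4 by the parity of n1 + n2 + n3 + n4 and matching the parity
  classes by explicit linear bijections that preserve the exponent yields three quartic identities
  such as P2 P3 P4^2 - q P1 P2 P3^2 = P1 P4 P5^2.  With them, each difference
  J_1 [..] - J_1 [..] of the first chain becomes q^k times a product of the series
  (q^11;q^22)/((q^a;q^11)(q^(11-a);q^11)), (q^22;q^22)/((q^a;q^11)(q^(11-a);q^11)) and
  1/(q^a;q^11).  These have non-negative coefficients factor by factor, since
  (1 - q^(x+y))/((1 - q^x)(1 - q^y)) = 1/(1 - q^y) + q^x/(1 - q^x).  The second chain follows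
  because 1/J_1 has non-negative coefficients as well.
*)

theory Submission
  imports Defs
begin

unbundle fps_syntax

section \<open>Power series with non-negative coefficients\<close>

definition fps_nonneg :: "real fps \<Rightarrow> bool" where
  "fps_nonneg F \<longleftrightarrow> (\<forall>n. 0 \<le> F $ n)"

lemma fps_coeff_le_iff_nonneg: "fps_coeff_le F G \<longleftrightarrow> fps_nonneg (G - F)"
  by (simp add: fps_coeff_le_def fps_nonneg_def)

lemma fps_nonneg_mult: "fps_nonneg A \<Longrightarrow> fps_nonneg B \<Longrightarrow> fps_nonneg (A * B)"
  unfolding fps_nonneg_def fps_mult_nth by (auto intro!: sum_nonneg)

lemma fps_nonneg_add: "fps_nonneg A \<Longrightarrow> fps_nonneg B \<Longrightarrow> fps_nonneg (A + B)"
  unfolding fps_nonneg_def by auto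

lemma fps_nonneg_one [simp]: "fps_nonneg 1"
  unfolding fps_nonneg_def by (simp add: fps_one_nth)

lemma fps_nonneg_X [simp]: "fps_nonneg fps_X"
  unfolding fps_nonneg_def by (simp add: fps_X_def)

lemma fps_nonneg_power: "fps_nonneg A \<Longrightarrow> fps_nonneg (A ^ n)"
  by (induction n) (auto intro: fps_nonneg_mult)

lemma fps_nonneg_prod: "(\<And>i. i \<in> S \<Longrightarrow> fps_nonneg (f i)) \<Longrightarrow> fps_nonneg (\<Prod>i\<in>S. f i)"
  by (induction S rule: infinite_finite_induct) (auto intro: fps_nonneg_mult)

section \<open>Infinite products of formal power series\<close>

lemma fps_cutoff_mult_cong:
  fixes A B C D :: "'a::comm_semiring_1 fps"
  assumes "fps_cutoff n A = fps_cutoff n B" "fps_cutoff n C = fps_cutoff n D"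
  shows "fps_cutoff n (A * C) = fps_cutoff n (B * D)"
  using assms unfolding fps_cutoff_eq_fps_cutoff_iff fps_mult_nth by (auto intro!: sum.cong)

lemma fps_cutoff_prod_cong:
  fixes f g :: "'b \<Rightarrow> 'a::comm_semiring_1 fps"
  shows "(\<And>i. i \<in> S \<Longrightarrow> fps_cutoff n (f i) = fps_cutoff n (g i)) \<Longrightarrow>
    fps_cutoff n (\<Prod>i\<in>S. f i) = fps_cutoff n (\<Prod>i\<in>S. g i)"
  by (induction S rule: infinite_finite_induct) (auto intro: fps_cutoff_mult_cong)

lemma fps_cutoff_inverse_cong:
  fixes A B :: "'a::field fps"
  assumes "fps_cutoff n A = fps_cutoff n B" "A $ 0 \<noteq> 0"
  shows "fps_cutoff n (inverse A) = fps_cutoff n (inverse B)"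
proof (cases "n = 0")
  case False
  then have "B $ 0 \<noteq> 0"
    using assms by (metis fps_cutoff_eq_fps_cutoff_iff gr0I)
  then show ?thesis
    using assms by (metis fps_cutoff_inverse)
qed simp

lemma fps_cutoff_mono:
  "fps_cutoff n F = fps_cutoff n G \<Longrightarrow> m \<le> n \<Longrightarrow> fps_cutoff m F = fps_cutoff m G"
  by (simp add: fps_cutoff_eq_fps_cutoff_iff)

definition fps_infprod :: "(nat \<Rightarrow> 'a::comm_ring_1 fps) \<Rightarrow> 'a fps" where
  "fps_infprod f = Abs_fps (\<lambda>n. (\<Prod>i\<le>n. f i) $ n)"

text \<open>Admissible factors agree with 1 below degree \<open>i + 1\<close>, so the factors of index above \<open>n\<close> do
  not change the coefficient of degree \<open>n\<close>: \<^const>\<open>fps_infprod\<close> is then the coefficientwise limit of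
  the partial products.\<close>

definition admissible_factors :: "(nat \<Rightarrow> 'a::comm_ring_1 fps) \<Rightarrow> bool" where
  "admissible_factors f \<longleftrightarrow> (\<forall>i. fps_cutoff (Suc i) (f i) = fps_cutoff (Suc i) 1)"

lemma admissible_factorsD:
  "admissible_factors f \<Longrightarrow> k \<le> i \<Longrightarrow> fps_cutoff (Suc k) (f i) = fps_cutoff (Suc k) 1"
  unfolding admissible_factors_def by (meson Suc_le_mono fps_cutoff_mono)

lemma fps_cutoff_prod_admissible:
  assumes "admissible_factors f" "n \<le> N"
  shows "fps_cutoff (Suc n) (\<Prod>i<N. f i) = fps_cutoff (Suc n) (\<Prod>i<n. f i)"
proof -
  have "{..<N} = {..<n} \<union> {n..<N}"
    using assms(2) by auto
  then have "(\<Prod>i<N. f i) = (\<Prod>i<n. f i) * (\<Prod>i\<in>{n..<N}. f i)"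
    by (simp add: prod.union_disjoint ivl_disj_int)
  then have "fps_cutoff (Suc n) (\<Prod>i<N. f i) = fps_cutoff (Suc n) ((\<Prod>i<n. f i) * (\<Prod>i\<in>{n..<N}. f i))"
    by simp
  also have "\<dots> = fps_cutoff (Suc n) ((\<Prod>i<n. f i) * (\<Prod>i\<in>{n..<N}. 1))"
  proof (rule fps_cutoff_mult_cong[OF refl], rule fps_cutoff_prod_cong)
    fix i assume "i \<in> {n..<N}"
    then show "fps_cutoff (Suc n) (f i) = fps_cutoff (Suc n) 1"
      using admissible_factorsD[OF assms(1)] by simp
  qed
  finally show ?thesis
    by simp
qed

lemma fps_cutoff_infprod:
  assumes "admissible_factors f" "n \<le> N"
  shows "fps_cutoff (Suc n) (fps_infprod f) = fps_cutoff (Suc n) (\<Prod>i<N. f i)"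
  unfolding fps_cutoff_eq_fps_cutoff_iff
proof (intro allI impI)
  fix k assume "k < Suc n"
  then have "fps_cutoff (Suc k) (\<Prod>i<N. f i) = fps_cutoff (Suc k) (\<Prod>i<k. f i)"
    by (intro fps_cutoff_prod_admissible assms) (use assms(2) in simp)
  moreover have "fps_cutoff (Suc k) (\<Prod>i<Suc k. f i) = fps_cutoff (Suc k) (\<Prod>i<k. f i)"
    by (intro fps_cutoff_prod_admissible assms) simp
  ultimately have "(\<Prod>i<Suc k. f i) $ k = (\<Prod>i<N. f i) $ k"
    unfolding fps_cutoff_eq_fps_cutoff_iff by (metis lessI)
  then show "fps_infprod f $ k = (\<Prod>i<N. f i) $ k"
    by (simp add: fps_infprod_def lessThan_Suc_atMost)
qed

lemma fps_infprod_eqI: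
  assumes "admissible_factors f"
    and "\<And>n. \<exists>N\<ge>n. fps_cutoff (Suc n) F = fps_cutoff (Suc n) (\<Prod>i<N. f i)"
  shows "fps_infprod f = F"
proof (rule fps_ext)
  fix n
  obtain N where "N \<ge> n" "fps_cutoff (Suc n) F = fps_cutoff (Suc n) (\<Prod>i<N. f i)"
    using assms(2) by blast
  with fps_cutoff_infprod[OF assms(1) this(1)] show "fps_infprod f $ n = F $ n"
    by (metis fps_cutoff_eq_fps_cutoff_iff lessI)
qed

lemma admissible_factors_mult:
  assumes "admissible_factors f" "admissible_factors g"
  shows "admissible_factors (\<lambda>i. f i * g i)"
  unfolding admissible_factors_def
proof
  fix i
  have "fps_cutoff (Suc i) (f i * g i) = fps_cutoff (Suc i) (1 * 1)"
    using assms by (intro fps_cutoff_mult_cong) (simp_all add: admissible_factors_def)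
  then show "fps_cutoff (Suc i) (f i * g i) = fps_cutoff (Suc i) 1"
    by simp
qed

lemma admissible_factors_inverse:
  fixes f :: "nat \<Rightarrow> 'a::field fps"
  assumes "admissible_factors f"
  shows "admissible_factors (\<lambda>i. inverse (f i))"
  unfolding admissible_factors_def
proof
  fix i
  have "fps_cutoff (Suc i) (f i) = fps_cutoff (Suc i) 1"
    using assms by (simp add: admissible_factors_def)
  moreover from this have "f i $ 0 = 1"
    by (metis fps_cutoff_eq_fps_cutoff_iff fps_one_nth zero_less_Suc)
  ultimately show "fps_cutoff (Suc i) (inverse (f i)) = fps_cutoff (Suc i) 1"
    using fps_cutoff_inverse_cong by fastforce
qed

lemma admissible_factors_one_minus_X_power:
  assumes "\<And>i. e i > i"
  shows "admissible_factors (\<lambda>i. 1 - fps_X ^ e i)"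
  unfolding admissible_factors_def fps_cutoff_eq_fps_cutoff_iff
proof (intro allI impI)
  fix i j
  assume "j < Suc i"
  then show "(1 - fps_X ^ e i :: 'a fps) $ j = 1 $ j"
    using assms[of i] by (cases "j = 0") auto
qed

lemma admissible_factors_reindex:
  "admissible_factors f \<Longrightarrow> (\<And>k. g k \<ge> k) \<Longrightarrow> admissible_factors (\<lambda>k. f (g k))"
  by (simp add: admissible_factorsD admissible_factors_def)

lemma fps_infprod_mult:
  assumes "admissible_factors f" "admissible_factors g"
  shows "fps_infprod f * fps_infprod g = fps_infprod (\<lambda>i. f i * g i)"
proof (rule sym, rule fps_infprod_eqI[OF admissible_factors_mult[OF assms]])
  fix n
  have "fps_cutoff (Suc n) (fps_infprod f * fps_infprod g) =
      fps_cutoff (Suc n) ((\<Prod>i<n. f i) * (\<Prod>i<n. g i))"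
    by (intro fps_cutoff_mult_cong fps_cutoff_infprod assms) auto
  then show "\<exists>N\<ge>n. fps_cutoff (Suc n) (fps_infprod f * fps_infprod g) =
      fps_cutoff (Suc n) (\<Prod>i<N. f i * g i)"
    by (auto simp: prod.distrib)
qed

lemma fps_nth_infprod_0:
  assumes "admissible_factors f"
  shows "fps_infprod f $ 0 = 1"
proof -
  have "fps_cutoff 1 (fps_infprod f) = fps_cutoff 1 1"
    using fps_cutoff_infprod[OF assms, of 0 0] by simp
  then have "fps_infprod f $ 0 = (1 :: 'a fps) $ 0"
    unfolding fps_cutoff_eq_fps_cutoff_iff by blast
  then show ?thesis
    by simp
qed

lemma fps_infprod_inverse:
  fixes f :: "nat \<Rightarrow> 'a::field fps"
  assumes "admissible_factors f"
  shows "inverse (fps_infprod f) = fps_infprod (\<lambda>i. inverse (f i))"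
proof -
  have "\<And>i. f i $ 0 = 1"
    using assms unfolding admissible_factors_def
    by (metis fps_cutoff_eq_fps_cutoff_iff fps_one_nth zero_less_Suc)
  then have "fps_infprod (\<lambda>i. inverse (f i)) * fps_infprod f = fps_infprod (\<lambda>i. 1)"
    by (simp add: fps_infprod_mult admissible_factors_inverse assms inverse_mult_eq_1)
  also have "fps_infprod (\<lambda>i. 1) = (1 :: 'a fps)"
    by (rule fps_infprod_eqI) (auto simp: admissible_factors_def fps_cutoff_one)
  finally show ?thesis
    using fps_nth_infprod_0[OF assms] by (metis fps_inverse_unique mult.commute)
qed

lemma fps_nonneg_infprod: "(\<And>i. fps_nonneg (f i)) \<Longrightarrow> fps_nonneg (fps_infprod f)"
  using fps_nonneg_prod[of "{.._}" f] by (simp add: fps_nonneg_def fps_infprod_def)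

lemma fps_infprod_Suc_shift:
  assumes "admissible_factors f"
  shows "fps_infprod f = f 0 * fps_infprod (\<lambda>i. f (Suc i))"
proof (rule fps_infprod_eqI[OF assms])
  fix n
  have "admissible_factors (\<lambda>i. f (Suc i))"
    by (rule admissible_factors_reindex[OF assms]) simp
  then have "fps_cutoff (Suc n) (f 0 * fps_infprod (\<lambda>i. f (Suc i))) =
      fps_cutoff (Suc n) (f 0 * (\<Prod>i<n. f (Suc i)))"
    by (intro fps_cutoff_mult_cong fps_cutoff_infprod) auto
  also have "f 0 * (\<Prod>i<n. f (Suc i)) = (\<Prod>i<Suc n. f i)"
    by (rule prod.lessThan_Suc_shift[symmetric])
  finally show "\<exists>N\<ge>n. fps_cutoff (Suc n) (f 0 * fps_infprod (\<lambda>i. f (Suc i))) =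
      fps_cutoff (Suc n) (\<Prod>i<N. f i)"
    by (intro exI[of _ "Suc n"]) simp
qed

lemma prod_lessThan_mult_split:
  fixes M N :: nat
  assumes "M > 0"
  shows "(\<Prod>i<M * N. f i) = (\<Prod>r<M. \<Prod>k<N. f (M * k + r))"
proof -
  have "(\<Prod>r<M. \<Prod>k<N. f (M * k + r)) = (\<Prod>(r,k)\<in>{..<M} \<times> {..<N}. f (M * k + r))"
    by (rule prod.cartesian_product)
  also have "\<dots> = (\<Prod>i<M * N. f i)"
  proof (rule prod.reindex_bij_witness[where j = "\<lambda>(r,k). M * k + r" and i = "\<lambda>i. (i mod M, i div M)"])
    fix b assume "b \<in> {..<M} \<times> {..<N}"
    then obtain r k where b: "b = (r,k)" "r < M" "k < N" by auto
    then have "M * k + r < M * (k + 1)" by simp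
    also have "\<dots> \<le> M * N" using b by (intro mult_le_mono2) simp
    finally show "(case b of (r, k) \<Rightarrow> M * k + r) \<in> {..<M * N}" using b by simp
  qed (use assms in \<open>auto simp: less_mult_imp_div_less mult.commute\<close>)
  finally show ?thesis by simp
qed

lemma fps_infprod_dissect:
  assumes "admissible_factors f" "M > 0"
  shows "fps_infprod f = (\<Prod>r<M. fps_infprod (\<lambda>k. f (M * k + r)))"
proof (rule fps_infprod_eqI[OF assms(1)])
  fix n
  have "admissible_factors (\<lambda>k. f (M * k + r))" for r
    by (rule admissible_factors_reindex[OF assms(1)]) (use assms(2) in \<open>simp add: trans_le_add1\<close>)
  then have "fps_cutoff (Suc n) (\<Prod>r<M. fps_infprod (\<lambda>k. f (M * k + r))) =
      fps_cutoff (Suc n) (\<Prod>r<M. \<Prod>k<Suc n. f (M * k + r))"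
    by (intro fps_cutoff_prod_cong fps_cutoff_infprod) simp_all
  also have "(\<Prod>r<M. \<Prod>k<Suc n. f (M * k + r)) = (\<Prod>i<M * Suc n. f i)"
    by (rule prod_lessThan_mult_split[OF assms(2), symmetric])
  finally have "fps_cutoff (Suc n) (\<Prod>r<M. fps_infprod (\<lambda>k. f (M * k + r))) =
      fps_cutoff (Suc n) (\<Prod>i<M * Suc n. f i)" .
  moreover have "n \<le> M * Suc n"
    using assms(2) by (cases M) simp_all
  ultimately show "\<exists>N\<ge>n. fps_cutoff (Suc n) (\<Prod>r<M. fps_infprod (\<lambda>k. f (M * k + r))) =
      fps_cutoff (Suc n) (\<Prod>i<N. f i)"
    by (intro exI[of _ "M * Suc n"] conjI)
qed

section \<open>\<open>q\<close>-Pochhammer symbols\<close>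

lemma qpoch_eq_fps_infprod: "qpoch a m = fps_infprod (\<lambda>i. 1 - fps_X ^ (a + m * i))"
  by (simp add: qpoch_def fps_infprod_def)

lemma admissible_qpoch_factors:
  assumes "a \<ge> 1" "m \<ge> 1"
  shows "admissible_factors (\<lambda>i. 1 - fps_X ^ (a + m * i) :: 'a::comm_ring_1 fps)"
proof (rule admissible_factors_one_minus_X_power)
  fix i
  have "i \<le> m * i"
    using assms(2) by simp
  then show "i < a + m * i"
    using assms(1) by linarith
qed

lemma fps_nth_qpoch_0: "a \<ge> 1 \<Longrightarrow> m \<ge> 1 \<Longrightarrow> qpoch a m $ 0 = 1"
  unfolding qpoch_eq_fps_infprod by (intro fps_nth_infprod_0 admissible_qpoch_factors)

lemma qpoch_mult_inverse: "a \<ge> 1 \<Longrightarrow> m \<ge> 1 \<Longrightarrow> qpoch a m * inverse (qpoch a m) = 1"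
  by (simp add: inverse_mult_eq_1' fps_nth_qpoch_0)

lemma qpoch_shift:
  assumes "a \<ge> 1" "m \<ge> 1"
  shows "qpoch a m = (1 - fps_X ^ a) * qpoch (a + m) m"
  unfolding qpoch_eq_fps_infprod
  by (subst fps_infprod_Suc_shift[OF admissible_qpoch_factors[OF assms]]) (simp add: algebra_simps)

lemma qpoch_dissect:
  assumes "a \<ge> 1" "m \<ge> 1" "M > 0"
  shows "qpoch a m = (\<Prod>r<M. qpoch (a + m * r) (M * m))"
  unfolding qpoch_eq_fps_infprod
  by (subst fps_infprod_dissect[OF admissible_qpoch_factors[OF assms(1,2)] assms(3)])
     (simp add: algebra_simps)

lemma qpoch_split_parity: "m \<ge> 1 \<Longrightarrow> qpoch m m = qpoch m (2 * m) * qpoch (2 * m) (2 * m)"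
  using qpoch_dissect[of m m 2] by (simp add: numeral_2_eq_2)

lemma qpoch_one_one_dissect: "M > 0 \<Longrightarrow> qpoch 1 1 = (\<Prod>r<M. qpoch (Suc r) M)"
  using qpoch_dissect[of 1 1 M] by simp

lemma fps_inverse_one_minus_X_power:
  assumes "x \<ge> 1"
  shows "inverse (1 - fps_X ^ x :: 'a::field fps) = Abs_fps (\<lambda>n. if x dvd n then 1 else 0)"
proof (rule fps_inverse_unique, rule fps_ext)
  fix n
  let ?A = "Abs_fps (\<lambda>n. if x dvd n then 1 else 0) :: 'a fps"
  have "(1 - fps_X ^ x) * ?A = ?A - fps_X ^ x * ?A"
    by (simp add: algebra_simps)
  then have "((1 - fps_X ^ x) * ?A) $ n = ?A $ n - (if n < x then 0 else ?A $ (n - x))"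
    by (simp add: fps_X_power_mult_nth)
  also have "\<dots> = 1 $ n"
  proof (cases "n < x")
    case True
    then have "x dvd n \<longleftrightarrow> n = 0"
      using assms by (auto dest: dvd_imp_le)
    then show ?thesis
      using True by auto
  next
    case False
    then have "x dvd n \<longleftrightarrow> x dvd (n - x)"
      using assms by (simp add: dvd_minus_self)
    then show ?thesis
      using False assms by auto
  qed
  finally show "((1 - fps_X ^ x) * ?A) $ n = 1 $ n" .
qed

lemma fps_nonneg_inverse_one_minus_X_power: "x \<ge> 1 \<Longrightarrow> fps_nonneg (inverse (1 - fps_X ^ x))"
  by (simp add: fps_inverse_one_minus_X_power fps_nonneg_def)

lemma fps_nonneg_inverse_qpoch:
  assumes "a \<ge> 1" "m \<ge> 1"
  shows "fps_nonneg (inverse (qpoch a m))"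
  unfolding qpoch_eq_fps_infprod fps_infprod_inverse[OF admissible_qpoch_factors[OF assms]]
  by (rule fps_nonneg_infprod) (use assms in \<open>auto intro: fps_nonneg_inverse_one_minus_X_power\<close>)

lemma fps_nonneg_one_minus_X_power_quotient:
  assumes "x \<ge> 1" "y \<ge> 1"
  shows "fps_nonneg ((1 - fps_X ^ (x + y)) * inverse (1 - fps_X ^ x) * inverse (1 - fps_X ^ y))"
proof -
  let ?u = "1 - fps_X ^ x :: real fps" and ?v = "1 - fps_X ^ y :: real fps"
  have unit: "?u * inverse ?u = 1" "?v * inverse ?v = 1"
    using assms by (simp_all add: inverse_mult_eq_1')
  have "1 - fps_X ^ (x + y) = ?u + fps_X ^ x * ?v"
    by (simp add: algebra_simps power_add)
  then have "(1 - fps_X ^ (x + y)) * inverse ?u * inverse ?v =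
      inverse ?v * (?u * inverse ?u) + fps_X ^ x * inverse ?u * (?v * inverse ?v)"
    by (simp add: algebra_simps)
  also have "\<dots> = inverse ?v + fps_X ^ x * inverse ?u"
    by (simp add: unit)
  finally show ?thesis
    using assms
    by (auto intro!: fps_nonneg_add fps_nonneg_mult fps_nonneg_power fps_nonneg_inverse_one_minus_X_power)
qed

lemma fps_nonneg_qpoch_quotient:
  assumes "c \<ge> 1" "d \<ge> 1" "m \<ge> 1"
  shows "fps_nonneg (qpoch (c + d) (2 * m) * inverse (qpoch c m) * inverse (qpoch d m))"
proof -
  let ?f = "\<lambda>i. 1 - fps_X ^ ((c + d) + 2 * m * i) :: real fps"
  let ?g = "\<lambda>i. 1 - fps_X ^ (c + m * i) :: real fps"
  let ?h = "\<lambda>i. 1 - fps_X ^ (d + m * i) :: real fps"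
  have f: "admissible_factors ?f"
    using assms by (intro admissible_qpoch_factors) simp_all
  have g: "admissible_factors (\<lambda>i. inverse (?g i))" and h: "admissible_factors (\<lambda>i. inverse (?h i))"
    using assms by (intro admissible_factors_inverse admissible_qpoch_factors; simp)+
  have "qpoch (c + d) (2 * m) * inverse (qpoch c m) * inverse (qpoch d m) =
      fps_infprod (\<lambda>i. ?f i * inverse (?g i) * inverse (?h i))"
    unfolding qpoch_eq_fps_infprod
    using assms
    by (simp add: fps_infprod_inverse admissible_qpoch_factors fps_infprod_mult
        admissible_factors_mult f g h)
  also have "fps_nonneg \<dots>"
  proof (rule fps_nonneg_infprod)
    fix i
    have exp: "(c + d) + 2 * m * i = (c + m * i) + (d + m * i)"
      by simp
    show "fps_nonneg (?f i * inverse (?g i) * inverse (?h i))"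
      unfolding exp by (rule fps_nonneg_one_minus_X_power_quotient) (use assms in simp_all)
  qed
  finally show ?thesis .
qed

lemma fps_nonneg_qpoch_odd_quotient:
  assumes "a \<ge> 1" "b \<ge> 1" "a + b = m"
  shows "fps_nonneg (qpoch m (2 * m) * inverse (qpoch a m) * inverse (qpoch b m))"
  using fps_nonneg_qpoch_quotient[of a b m] assms by simp

lemma fps_nonneg_qpoch_even_quotient:
  assumes "a \<ge> 1" "b \<ge> 1" "a + b = m"
  shows "fps_nonneg (qpoch (2 * m) (2 * m) * inverse (qpoch a m) * inverse (qpoch b m))"
proof -
  have m: "m \<ge> 1" and exp: "(a + m) + b = 2 * m"
    using assms by simp_all
  have "qpoch (2 * m) (2 * m) * inverse (qpoch a m) * inverse (qpoch b m) =
      inverse (1 - fps_X ^ a) * (qpoch (2 * m) (2 * m) * inverse (qpoch (a + m) m) * inverse (qpoch b m))"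
    using assms(1) m by (simp add: qpoch_shift[of a m] fps_inverse_mult mult_ac)
  also have "fps_nonneg \<dots>"
  proof (rule fps_nonneg_mult)
    show "fps_nonneg (inverse (1 - fps_X ^ a))"
      using assms(1) by (rule fps_nonneg_inverse_one_minus_X_power)
    show "fps_nonneg (qpoch (2 * m) (2 * m) * inverse (qpoch (a + m) m) * inverse (qpoch b m))"
      using fps_nonneg_qpoch_quotient[of "a + m" b m] assms(2) m unfolding exp by simp
  qed
  finally show ?thesis .
qed

section \<open>The \<open>q\<close>-binomial theorem\<close>

fun qbinomial :: "'a::comm_ring_1 \<Rightarrow> nat \<Rightarrow> nat \<Rightarrow> 'a" where
  "qbinomial p n 0 = 1"
| "qbinomial p 0 (Suc k) = 0"
| "qbinomial p (Suc n) (Suc k) = qbinomial p n k + p ^ Suc k * qbinomial p n (Suc k)"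

lemma qbinomial_eq_0: "n < k \<Longrightarrow> qbinomial p n k = 0"
proof (induction n arbitrary: k)
  case 0 then show ?case by (cases k) auto
next
  case (Suc n) then show ?case by (cases k) auto
qed

lemma Suc_choose_two: "Suc j choose 2 = (j choose 2) + j"
  by (simp add: numeral_2_eq_2)

lemma qbinomial_theorem_step:
  fixes x y p :: "'a::comm_ring_1"
  assumes "n \<le> M"
  shows "(x + y) * (\<Sum>j\<le>M. qbinomial p n j * p ^ (j choose 2) * (y * p) ^ j * x ^ (n - j)) =
    (\<Sum>j\<le>Suc M. qbinomial p (Suc n) j * p ^ (j choose 2) * y ^ j * x ^ (Suc n - j))"
proof -
  have "(x + y) * (\<Sum>j\<le>M. qbinomial p n j * p ^ (j choose 2) * (y * p) ^ j * x ^ (n - j)) =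
      (\<Sum>j\<le>M. qbinomial p n j * p ^ (Suc j choose 2) * y ^ j * x ^ (Suc n - j)) +
      (\<Sum>j\<le>M. qbinomial p n j * p ^ (Suc j choose 2) * y ^ Suc j * x ^ (n - j))"
  proof -
    have f1: "x * (qbinomial p n j * p ^ (j choose 2) * (y * p) ^ j * x ^ (n - j)) =
        qbinomial p n j * p ^ (Suc j choose 2) * y ^ j * x ^ (Suc n - j)" for j
    proof (cases "j \<le> n")
      case True
      then have "x ^ (Suc n - j) = x * x ^ (n - j)"
        by (simp add: Suc_diff_le)
      then show ?thesis
        by (simp add: Suc_choose_two power_add power_mult_distrib algebra_simps)
    next
      case False
      then show ?thesis
        by (simp add: qbinomial_eq_0)
    qed
    have f2: "y * (qbinomial p n j * p ^ (j choose 2) * (y * p) ^ j * x ^ (n - j)) =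
        qbinomial p n j * p ^ (Suc j choose 2) * y ^ Suc j * x ^ (n - j)" for j
      by (simp add: Suc_choose_two power_add power_mult_distrib algebra_simps)
    let ?S = "\<Sum>j\<le>M. qbinomial p n j * p ^ (j choose 2) * (y * p) ^ j * x ^ (n - j)"
    have h1: "x * ?S = (\<Sum>j\<le>M. qbinomial p n j * p ^ (Suc j choose 2) * y ^ j * x ^ (Suc n - j))"
      unfolding sum_distrib_left by (rule sum.cong) (simp_all only: f1)
    have h2: "y * ?S = (\<Sum>j\<le>M. qbinomial p n j * p ^ (Suc j choose 2) * y ^ Suc j * x ^ (n - j))"
      unfolding sum_distrib_left by (rule sum.cong) (simp_all only: f2)
    show ?thesis unfolding distrib_right h1 h2 by (rule refl)
  qed
  also have "\<dots> = (\<Sum>j\<le>Suc M. qbinomial p (Suc n) j * p ^ (j choose 2) * y ^ j * x ^ (Suc n - j))"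
  proof -
    have s0: "(\<Sum>j\<le>M. qbinomial p n j * p ^ (Suc j choose 2) * y ^ j * x ^ (Suc n - j))
        = x ^ Suc n + (\<Sum>j\<le>M. p ^ Suc j * qbinomial p n (Suc j) * p ^ (Suc j choose 2) * y ^ Suc j * x ^ (Suc n - Suc j))"
    proof -
      have "(\<Sum>j\<le>M. qbinomial p n j * p ^ (Suc j choose 2) * y ^ j * x ^ (Suc n - j))
          = (\<Sum>j\<le>Suc M. qbinomial p n j * p ^ (Suc j choose 2) * y ^ j * x ^ (Suc n - j))"
        using assms by (simp add: qbinomial_eq_0)
      also have "\<dots> = x ^ Suc n +
          (\<Sum>j\<le>M. qbinomial p n (Suc j) * p ^ (Suc (Suc j) choose 2) * y ^ Suc j * x ^ (Suc n - Suc j))"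
        by (subst sum.atMost_Suc_shift) (simp add: numeral_2_eq_2)
      also have "(\<Sum>j\<le>M. qbinomial p n (Suc j) * p ^ (Suc (Suc j) choose 2) * y ^ Suc j * x ^ (Suc n - Suc j))
          = (\<Sum>j\<le>M. p ^ Suc j * qbinomial p n (Suc j) * p ^ (Suc j choose 2) * y ^ Suc j * x ^ (Suc n - Suc j))"
        by (rule sum.cong) (simp_all add: Suc_choose_two[of "Suc _"] power_add algebra_simps)
      finally show ?thesis .
    qed
    show ?thesis unfolding s0
      by (subst sum.atMost_Suc_shift) (simp add: sum.distrib[symmetric] algebra_simps numeral_2_eq_2)
  qed
  finally show ?thesis .
qed

lemma qbinomial_theorem_upto:
  fixes x y p :: "'a::comm_ring_1"
  assumes "n \<le> M"
  shows "(\<Prod>i<n. x + y * p ^ i) = (\<Sum>j\<le>M. qbinomial p n j * p ^ (j choose 2) * y ^ j * x ^ (n - j))"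
  using assms
proof (induction n arbitrary: y M)
  case 0
  have "(\<Sum>j\<le>M. qbinomial p 0 j * p ^ (j choose 2) * y ^ j * x ^ (0 - j)) =
      (\<Sum>j\<in>{0}. qbinomial p 0 j * p ^ (j choose 2) * y ^ j * x ^ (0 - j))"
    by (rule sum.mono_neutral_right) (auto simp: qbinomial_eq_0)
  then show ?case
    by (simp add: numeral_2_eq_2)
next
  case (Suc n)
  then obtain M' where M: "M = Suc M'" "n \<le> M'"
    by (cases M) auto
  have "(\<Prod>i<Suc n. x + y * p ^ i) = (x + y) * (\<Prod>i<n. x + (y * p) * p ^ i)"
    unfolding prod.lessThan_Suc_shift by (simp add: mult.assoc)
  also have "\<dots> = (x + y) * (\<Sum>j\<le>M'. qbinomial p n j * p ^ (j choose 2) * (y * p) ^ j * x ^ (n - j))"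
    using Suc.IH[OF M(2)] by simp
  also have "\<dots> = (\<Sum>j\<le>M. qbinomial p (Suc n) j * p ^ (j choose 2) * y ^ j * x ^ (Suc n - j))"
    unfolding M(1) by (rule qbinomial_theorem_step[OF M(2)])
  finally show ?case .
qed

lemma qbinomial_theorem: "(\<Prod>i<n. x + y * p ^ i) = (\<Sum>j\<le>n. qbinomial p n j * p ^ (j choose 2) * y ^ j * x ^ (n - j))"
  for x y p :: "'a::comm_ring_1"
  by (rule qbinomial_theorem_upto) simp

definition qpoch_fin :: "'a::comm_ring_1 \<Rightarrow> nat \<Rightarrow> 'a" where
  "qpoch_fin p r = (\<Prod>i<r. 1 - p ^ Suc i)"

lemma qbinomial_mult_qpoch_fin:
  "k \<le> n \<Longrightarrow> qbinomial p n k * qpoch_fin p k * qpoch_fin p (n - k) = qpoch_fin p n"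
proof (induction n arbitrary: k)
  case 0 then show ?case by (simp add: qpoch_fin_def)
next
  case (Suc n)
  show ?case
  proof (cases k)
    case 0 then show ?thesis by (simp add: qpoch_fin_def)
  next
    case (Suc k')
    then have k': "k' \<le> n" using Suc.prems by simp
    have A: "qbinomial p n k' * qpoch_fin p k' * qpoch_fin p (n - k') = qpoch_fin p n"
      by (rule Suc.IH[OF k'])
    have qpoch_fin_Suc: "\<And>r. qpoch_fin p (Suc r) = qpoch_fin p r * (1 - p ^ Suc r)"
      by (simp add: qpoch_fin_def)
    show ?thesis
    proof (cases "k' = n")
      case True
      have "qbinomial p (Suc n) k * qpoch_fin p k * qpoch_fin p (Suc n - k) = qbinomial p n n * qpoch_fin p (Suc n) * qpoch_fin p 0"
        using Suc True by (simp add: qbinomial_eq_0)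
      also have "\<dots> = (qbinomial p n n * qpoch_fin p n * qpoch_fin p 0) * (1 - p ^ Suc n)" by (simp only: qpoch_fin_Suc mult_ac)
      also have "\<dots> = qpoch_fin p (Suc n)" using A True by (simp add: qpoch_fin_Suc)
      finally show ?thesis .
    next
      case False
      then have k2: "Suc k' \<le> n" using k' by simp
      have B: "qbinomial p n (Suc k') * qpoch_fin p (Suc k') * qpoch_fin p (n - Suc k') = qpoch_fin p n" by (rule Suc.IH[OF k2])
      have e1: "n - k' = Suc (n - Suc k')" using k2 by simp
      have "qbinomial p (Suc n) k * qpoch_fin p k * qpoch_fin p (Suc n - k)
          = (qbinomial p n k' + p ^ Suc k' * qbinomial p n (Suc k')) * qpoch_fin p (Suc k') * qpoch_fin p (n - k')"
        using Suc by simp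
      also have "\<dots> = (qbinomial p n k' * qpoch_fin p k' * qpoch_fin p (n - k')) * (1 - p ^ Suc k')
          + p ^ Suc k' * (qbinomial p n (Suc k') * qpoch_fin p (Suc k') * qpoch_fin p (n - Suc k')) * (1 - p ^ (n - k'))"
        unfolding qpoch_fin_Suc e1 by (simp add: algebra_simps)
      also have "\<dots> = qpoch_fin p n * (1 - p ^ Suc k') + qpoch_fin p n * (p ^ Suc k' - p ^ Suc k' * p ^ (n - k'))"
        unfolding A B by (simp add: algebra_simps)
      also have "\<dots> = qpoch_fin p n * (1 - p ^ Suc n)"
      proof -
        have exp_sum: "Suc k' + (n - k') = Suc n" using k2 by simp
        have pk: "p ^ Suc k' * p ^ (n - k') = p ^ Suc n" by (simp only: power_add[symmetric] exp_sum)
        show ?thesis unfolding pk by (simp add: algebra_simps)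
      qed
      also have "\<dots> = qpoch_fin p (Suc n)" by (simp add: qpoch_fin_Suc)
      finally show ?thesis .
    qed
  qed
qed

section \<open>The Jacobi triple product\<close>

definition alt_sign :: "int \<Rightarrow> real" where
  "alt_sign k = (if even k then 1 else -1)"

lemma alt_sign_add: "alt_sign a * alt_sign b = alt_sign (a + b)"
  unfolding alt_sign_def by auto

definition theta_exp :: "nat \<Rightarrow> nat \<Rightarrow> int \<Rightarrow> int" where
  "theta_exp m a k = int m * (k * (k - 1) div 2) + int a * k"

lemma double_theta_exp: "2 * theta_exp m a k = int m * (k * (k - 1)) + 2 * int a * k"
proof -
  have "even (k * (k - 1))"
    by simp
  then have "k * (k - 1) = 2 * (k * (k - 1) div 2)"
    by simp
  then show ?thesis
    unfolding theta_exp_def by (simp add: algebra_simps)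
qed

lemma abs_le_theta_exp:
  assumes "1 \<le> a" "a < m"
  shows "\<bar>k\<bar> \<le> theta_exp m a k"
proof (cases "k \<ge> 1")
  case True
  then have "int m * (k * (k - 1)) \<ge> 0" and "2 * int a * k \<ge> 2 * k"
    using assms by simp_all
  then have "2 * theta_exp m a k \<ge> 2 * k"
    unfolding double_theta_exp by linarith
  then show ?thesis
    using True by simp
next
  case False
  define t where "t = - k"
  have t: "t \<ge> 0" "k = - t"
    using False by (auto simp: t_def)
  have "t * (t + 1) \<ge> 2 * t"
    using t by (cases "t = 0") (auto simp: algebra_simps intro: mult_left_mono[of 1 t t, simplified])
  then have "int m * (t * (t + 1)) \<ge> int m * (2 * t)"
    by (intro mult_left_mono) auto
  moreover have "int m * (2 * t) \<ge> (int a + 1) * (2 * t)"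
    using assms t by (intro mult_right_mono) auto
  moreover have "k * (k - 1) = t * (t + 1)"
    using t by (simp add: algebra_simps)
  ultimately have "2 * theta_exp m a k \<ge> 2 * t"
    unfolding double_theta_exp using t by (simp add: algebra_simps)
  then show ?thesis
    using t by simp
qed

lemma theta_exp_nonneg: "1 \<le> a \<Longrightarrow> a < m \<Longrightarrow> theta_exp m a k \<ge> 0"
  using abs_le_theta_exp[of a m k] by linarith

lemma sum_lessThan_choose_two: "(\<Sum>i<n. i) = (n choose 2)"
proof (induction n)
  case 0 then show ?case by simp
next
  case (Suc n) then show ?case by (simp add: Suc_choose_two)
qed

lemma minus_one_power_eq_alt_sign: "(-1::real) ^ j = (-1) ^ n * alt_sign (int j - int n)"
proof -
  have "even (int j - int n) \<longleftrightarrow> even (j + n)"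
    by (simp add: even_add)
  then show ?thesis
    unfolding alt_sign_def by (auto simp: minus_one_power_iff)
qed

lemma prod_atLeast_lessThan_double: "(\<Prod>i\<in>{n..<2*n}. f i) = (\<Prod>i<n. f (n + i))" for n :: nat
  by (rule prod.reindex_bij_witness[where j = "\<lambda>i. i - n" and i = "\<lambda>i. n + i"]) auto

lemma double_choose_two: "2 * int (r choose 2) = int r * (int r - 1)"
proof -
  have "even (r * (r - 1))"
    by (cases r) auto
  then have "2 * (r choose 2) = r * (r - 1)"
    by (simp add: choose_two)
  then show ?thesis
    by (cases r) (auto simp: algebra_simps of_nat_mult[symmetric] simp del: of_nat_mult)
qed

lemma exponent_eq_theta_exp:
  assumes "j \<le> 2 * n" "a \<le> m * n" "1 \<le> a" "a < m"
  shows "m * (j choose 2) + (m * n - a) * (2 * n - j) =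
    (m * (n choose 2) + n * (m * n - a)) + nat (theta_exp m a (int j - int n))"
proof -
  have e0: "theta_exp m a (int j - int n) \<ge> 0" by (rule theta_exp_nonneg) (use assms in auto)
  obtain d0 where d0: "m * n = a + d0" using le_Suc_ex[OF assms(2)] by blast
  define d where "d = d0"
  have d: "m * n = d + a" using d0 unfolding d_def by simp
  obtain e where e: "2 * n = j + e" using assms(1) le_Suc_ex by blast
  have dd: "m * n - a = d" "2 * n - j = e" using d e by auto
  have di: "int d = int m * int n - int a" using d by (simp add: algebra_simps of_nat_mult[symmetric] del: of_nat_mult)
  have ei: "int e = 2 * int n - int j" using e by (simp add: algebra_simps of_nat_mult[symmetric] del: of_nat_mult)
  have "2 * int (m * (j choose 2) + d * e) = 2 * int (m * (n choose 2) + n * d) + 2 * theta_exp m a (int j - int n)"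
  proof -
    have "2 * int (m * (j choose 2) + d * e) = int m * (2 * int (j choose 2)) + 2 * int d * int e" by (simp add: algebra_simps)
    also have "\<dots> = int m * (int j * (int j - 1)) + 2 * (int m * int n - int a) * (2 * int n - int j)"
      unfolding double_choose_two di ei ..
    also have "\<dots> = int m * (int n * (int n - 1)) + 2 * int n * (int m * int n - int a)
        + (int m * ((int j - int n) * (int j - int n - 1)) + 2 * int a * (int j - int n))"
      by (simp add: algebra_simps)
    also have "\<dots> = int m * (2 * int (n choose 2)) + 2 * int n * int d + 2 * theta_exp m a (int j - int n)"
      unfolding double_theta_exp double_choose_two di by (simp add: algebra_simps)
    also have "\<dots> = 2 * int (m * (n choose 2) + n * d) + 2 * theta_exp m a (int j - int n)"
      by (simp add: algebra_simps)
    finally show ?thesis .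
  qed
  moreover have "\<And>X Y Z :: int. 2 * X = 2 * Y + 2 * Z \<Longrightarrow> X = Y + Z" by linarith
  ultimately have h: "int (m * (j choose 2) + d * e) = int (m * (n choose 2) + n * d) + theta_exp m a (int j - int n)" by blast
  have "int (m * (j choose 2) + d * e) = int (m * (n choose 2) + n * d + nat (theta_exp m a (int j - int n)))" using h e0 by simp
  then show ?thesis unfolding dd by (simp only: of_nat_eq_iff)
qed

lemma prod_X_power_upper_half:
  assumes "a \<le> m * n"
  shows "(\<Prod>i\<in>{n..<2*n}. fps_X ^ (m * n - a) + (-1) * (fps_X ^ m) ^ i :: real fps) =
    fps_X ^ (n * (m * n - a)) * (\<Prod>i<n. 1 - fps_X ^ (a + m * i))"
proof -
  have "(\<Prod>i\<in>{n..<2*n}. fps_X ^ (m * n - a) + (-1) * (fps_X ^ m) ^ i :: real fps) =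
      (\<Prod>i<n. fps_X ^ (m * n - a) * (1 - fps_X ^ (a + m * i)))"
    unfolding prod_atLeast_lessThan_double
  proof (rule prod.cong)
    fix i
    have "m * n - a + (a + m * i) = m * (n + i)"
      using assms by (simp add: algebra_simps)
    then show "fps_X ^ (m * n - a) + (-1) * (fps_X ^ m) ^ (n + i) =
        (fps_X ^ (m * n - a) * (1 - fps_X ^ (a + m * i)) :: real fps)"
      by (simp add: algebra_simps power_add[symmetric] power_mult[symmetric])
  qed simp
  also have "(\<Prod>i<n. (fps_X ^ (m * n - a) :: real fps)) = fps_X ^ (n * (m * n - a))"
    by (simp add: power_mult[symmetric] mult.commute)
  then have "(\<Prod>i<n. fps_X ^ (m * n - a) * (1 - fps_X ^ (a + m * i))) =
      fps_X ^ (n * (m * n - a)) * (\<Prod>i<n. 1 - fps_X ^ (a + m * i) :: real fps)"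
    by (simp only: prod.distrib)
  finally show ?thesis .
qed

lemma prod_X_power_lower_half:
  assumes "a < m"
  shows "(\<Prod>i<n. fps_X ^ (m * n - a) + (-1) * (fps_X ^ m) ^ i :: real fps) =
    fps_const ((-1) ^ n) * fps_X ^ (m * (n choose 2)) * (\<Prod>i<n. 1 - fps_X ^ ((m - a) + m * i))"
proof -
  have "(\<Prod>i<n. fps_X ^ (m * n - a) + (-1) * (fps_X ^ m) ^ i :: real fps) =
      (\<Prod>i<n. fps_X ^ (m * n - a) + (-1) * (fps_X ^ m) ^ (n - Suc i))"
    by (rule prod.nat_diff_reindex[symmetric])
  also have "\<dots> = (\<Prod>i<n. fps_const (-1) * (fps_X ^ (m * (n - Suc i)) * (1 - fps_X ^ ((m - a) + m * i))))"
  proof (rule prod.cong)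
    fix i assume i: "i \<in> {..<n}"
    then obtain r where r: "n = Suc (i + r)"
      using less_imp_Suc_add by auto
    then have "m * n = m * r + m + m * i"
      by (simp add: algebra_simps)
    then have "m * (n - Suc i) + ((m - a) + m * i) = m * n - a"
      using r assms by simp
    then show "fps_X ^ (m * n - a) + (-1) * (fps_X ^ m) ^ (n - Suc i) =
        fps_const (-1) * (fps_X ^ (m * (n - Suc i)) * (1 - fps_X ^ ((m - a) + m * i)) :: real fps)"
      by (simp add: algebra_simps power_add[symmetric] power_mult[symmetric] fps_const_neg[symmetric])
  qed simp
  also have "\<dots> = fps_const ((-1) ^ n) * fps_X ^ (m * (n choose 2)) * (\<Prod>i<n. 1 - fps_X ^ ((m - a) + m * i))"
  proof -
    have "(\<Prod>i<n. fps_X ^ (m * (n - Suc i)) :: real fps) = (\<Prod>i<n. fps_X ^ (m * i))"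
      using prod.nat_diff_reindex[of "\<lambda>i. fps_X ^ (m * i) :: real fps" n] by simp
    also have "\<dots> = fps_X ^ (m * (n choose 2))"
      by (simp only: power_sum[symmetric] sum_distrib_left[symmetric] sum_lessThan_choose_two)
    finally show ?thesis
      by (simp add: prod.distrib fps_const_power)
  qed
  finally show ?thesis .
qed

lemma prod_X_power_minus_X_power:
  assumes "1 \<le> a" "a < m" "n \<ge> 1"
  shows "(\<Prod>i<2*n. fps_X ^ (m * n - a) + (-1) * (fps_X ^ m) ^ i :: real fps) =
    fps_const ((-1) ^ n) * fps_X ^ (m * (n choose 2) + n * (m * n - a)) *
    ((\<Prod>i<n. 1 - fps_X ^ (a + m * i)) * (\<Prod>i<n. 1 - fps_X ^ ((m - a) + m * i)))"
proof -
  have "m \<le> m * n"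
    using assms(3) by simp
  then have amn: "a \<le> m * n"
    using assms(2) by linarith
  have split: "{..<2*n} = {..<n} \<union> {n..<2*n}"
    by auto
  have "(\<Prod>i<2*n. fps_X ^ (m * n - a) + (-1) * (fps_X ^ m) ^ i :: real fps) =
      (\<Prod>i<n. fps_X ^ (m * n - a) + (-1) * (fps_X ^ m) ^ i) *
      (\<Prod>i\<in>{n..<2*n}. fps_X ^ (m * n - a) + (-1) * (fps_X ^ m) ^ i)"
    unfolding split by (rule prod.union_disjoint) auto
  then show ?thesis
    unfolding prod_X_power_upper_half[OF amn] prod_X_power_lower_half[OF assms(2)]
    by (simp add: power_add algebra_simps fps_const_mult[symmetric])
qed

lemma qbinomial_term_eq_theta_term:
  assumes "1 \<le> a" "a < m" "n \<ge> 1" "j \<le> 2 * n"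
  defines "x \<equiv> fps_X ^ (m * n - a) :: real fps" and "p \<equiv> fps_X ^ m :: real fps"
  shows "qbinomial p (2*n) j * p ^ (j choose 2) * (-1) ^ j * x ^ (2*n - j) =
    fps_const ((-1) ^ n) * fps_X ^ (m * (n choose 2) + n * (m * n - a)) *
    (fps_const (alt_sign (int j - int n)) * qbinomial p (2*n) j * fps_X ^ nat (theta_exp m a (int j - int n)))"
proof -
  define E0 where "E0 = m * (n choose 2) + n * (m * n - a)"
  have "m \<le> m * n"
    using assms(3) by simp
  then have "a \<le> m * n"
    using assms(2) by linarith
  then have exponents: "p ^ (j choose 2) * x ^ (2 * n - j) = fps_X ^ E0 * fps_X ^ nat (theta_exp m a (int j - int n))"
    unfolding p_def x_def E0_def power_add[symmetric] power_mult[symmetric]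
    using exponent_eq_theta_exp[of j n a m] assms by simp
  have "(-1 :: real fps) = fps_const (-1)"
    by (simp only: fps_const_neg[symmetric] fps_const_1_eq_1)
  then have "(-1 :: real fps) ^ j = fps_const ((-1) ^ j)"
    by (simp only: fps_const_power)
  then have sign: "(-1 :: real fps) ^ j = fps_const ((-1) ^ n) * fps_const (alt_sign (int j - int n))"
    unfolding minus_one_power_eq_alt_sign[of j n] fps_const_mult .
  have "qbinomial p (2*n) j * p ^ (j choose 2) * (-1) ^ j * x ^ (2*n - j) =
      qbinomial p (2*n) j * (p ^ (j choose 2) * x ^ (2*n - j)) * (-1) ^ j"
    by (simp only: mult_ac)
  also have "\<dots> = fps_const ((-1) ^ n) * fps_X ^ E0 *
      (fps_const (alt_sign (int j - int n)) * qbinomial p (2*n) j * fps_X ^ nat (theta_exp m a (int j - int n)))"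
    unfolding exponents sign by (simp only: mult_ac)
  finally show ?thesis
    unfolding E0_def .
qed

text \<open>This is the \<open>q\<close>-binomial theorem for \<open>x = q\<^bsup>mn - a\<^esup>\<close>, \<open>y = -1\<close> and \<open>p = q\<^sup>m\<close>.\<close>

lemma finite_jacobi_triple_product:
  assumes "1 \<le> a" "a < m" "n \<ge> 1"
  shows "(\<Prod>i<n. 1 - fps_X ^ (a + m * i)) * (\<Prod>i<n. 1 - fps_X ^ ((m - a) + m * i)) =
    (\<Sum>j\<le>2*n. fps_const (alt_sign (int j - int n)) * qbinomial (fps_X ^ m) (2*n) j *
      fps_X ^ nat (theta_exp m a (int j - int n)) :: real fps)"
proof -
  let ?c = "fps_const ((-1::real) ^ n) * fps_X ^ (m * (n choose 2) + n * (m * n - a))"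
  have "?c * ((\<Prod>i<n. 1 - fps_X ^ (a + m * i)) * (\<Prod>i<n. 1 - fps_X ^ ((m - a) + m * i))) =
      (\<Prod>i<2*n. fps_X ^ (m * n - a) + (-1) * (fps_X ^ m) ^ i)"
    using prod_X_power_minus_X_power[OF assms] by simp
  also have "\<dots> = ?c * (\<Sum>j\<le>2*n. fps_const (alt_sign (int j - int n)) * qbinomial (fps_X ^ m) (2*n) j *
      fps_X ^ nat (theta_exp m a (int j - int n)))"
    unfolding qbinomial_theorem sum_distrib_left
    by (intro sum.cong refl qbinomial_term_eq_theta_term assms) simp
  finally show ?thesis
    by simp
qed

definition weighted_series :: "'a set \<Rightarrow> ('a \<Rightarrow> int) \<Rightarrow> ('a \<Rightarrow> real) \<Rightarrow> real fps" where
  "weighted_series S e w = Abs_fps (\<lambda>N. \<Sum>x\<in>{x\<in>S. e x = int N}. w x)"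

definition theta :: "nat \<Rightarrow> nat \<Rightarrow> real fps" where
  "theta m a = weighted_series UNIV (theta_exp m a) alt_sign"

lemma fps_cutoff_sum_cong:
  "(\<And>i. i \<in> S \<Longrightarrow> fps_cutoff n (f i) = fps_cutoff n (g i)) \<Longrightarrow>
    fps_cutoff n (\<Sum>i\<in>S. f i) = fps_cutoff n (\<Sum>i\<in>S. g i)"
  unfolding fps_cutoff_eq_fps_cutoff_iff by (auto intro!: sum.cong simp: fps_sum_nth)

lemma fps_cutoff_X_power_mult: "N < e \<Longrightarrow> fps_cutoff (Suc N) (fps_X ^ e * G) = 0"
  by (simp add: fps_eq_iff fps_X_power_mult_nth)

lemma qpoch_fin_X_power: "qpoch_fin (fps_X ^ m :: real fps) r = (\<Prod>i<r. 1 - fps_X ^ (m + m * i))"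
  unfolding qpoch_fin_def by (simp add: power_mult[symmetric] power_add)

lemma fps_cutoff_qbinomial_mult_qpoch:
  assumes "m \<ge> 1" "N \<le> j" "N \<le> k"
  shows "fps_cutoff (Suc N) (qbinomial (fps_X ^ m) (j + k) j * qpoch m m) = fps_cutoff (Suc N) 1"
proof -
  let ?E = "qpoch m m" and ?P = "qpoch_fin (fps_X ^ m :: real fps)"
  have approx: "fps_cutoff (Suc N) (?P r) = fps_cutoff (Suc N) ?E" if "N \<le> r" for r
    unfolding qpoch_fin_X_power qpoch_eq_fps_infprod
    by (rule sym, rule fps_cutoff_infprod) (use assms(1) that in \<open>simp_all add: admissible_qpoch_factors\<close>)
  have unit: "?E * inverse ?E = 1"
    using assms(1) by (simp add: inverse_mult_eq_1' fps_nth_qpoch_0)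
  have binomial: "qbinomial (fps_X ^ m) (j + k) j * ?P j * ?P k = ?P (j + k)"
    using qbinomial_mult_qpoch_fin[of j "j + k" "fps_X ^ m"] by simp
  have "fps_cutoff (Suc N) (qbinomial (fps_X ^ m) (j + k) j * ?E * ?E) =
      fps_cutoff (Suc N) (qbinomial (fps_X ^ m) (j + k) j * ?P j * ?P k)"
    using assms by (intro fps_cutoff_mult_cong refl approx[symmetric]) simp_all
  also have "\<dots> = fps_cutoff (Suc N) (?P (j + k))"
    by (simp only: binomial)
  also have "\<dots> = fps_cutoff (Suc N) ?E"
    using assms by (intro approx) simp
  finally have "fps_cutoff (Suc N) (qbinomial (fps_X ^ m) (j + k) j * ?E * ?E * inverse ?E) =
      fps_cutoff (Suc N) (?E * inverse ?E)"
    by (intro fps_cutoff_mult_cong refl)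
  then show ?thesis
    by (simp add: mult.assoc unit)
qed

lemma fps_nth_theta_eq_finite_sum:
  fixes N n :: nat
  assumes "1 \<le> a" "a < m" "N \<le> n"
  shows "theta m a $ N =
    (\<Sum>j\<le>2*n. fps_const (alt_sign (int j - int n)) * fps_X ^ nat (theta_exp m a (int j - int n))) $ N"
proof -
  have nonneg: "theta_exp m a k \<ge> 0" for k
    using assms by (intro theta_exp_nonneg) simp_all
  have "theta m a $ N = (\<Sum>k\<in>{k. theta_exp m a k = int N}. alt_sign k)"
    by (simp add: theta_def weighted_series_def)
  also have "\<dots> = (\<Sum>j\<in>{j\<in>{..2*n}. nat (theta_exp m a (int j - int n)) = N}. alt_sign (int j - int n))"
  proof (rule sum.reindex_bij_witness[where i = "\<lambda>j. int j - int n" and j = "\<lambda>k. nat (k + int n)"])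
    fix k assume k: "k \<in> {k. theta_exp m a k = int N}"
    have "\<bar>k\<bar> \<le> int N"
      using abs_le_theta_exp[OF assms(1,2), of k] k by simp
    then have "k + int n \<ge> 0" "k + int n \<le> 2 * int n"
      using assms(3) by auto
    then show "int (nat (k + int n)) - int n = k"
      and "nat (k + int n) \<in> {j\<in>{..2*n}. nat (theta_exp m a (int j - int n)) = N}"
      and "alt_sign (int (nat (k + int n)) - int n) = alt_sign k"
      using k by auto
  next
    fix j assume "j \<in> {j\<in>{..2*n}. nat (theta_exp m a (int j - int n)) = N}"
    then show "nat (int j - int n + int n) = j" and "int j - int n \<in> {k. theta_exp m a k = int N}"
      using nonneg by auto
  qed
  also have "\<dots> = (\<Sum>j\<le>2*n. if nat (theta_exp m a (int j - int n)) = N then alt_sign (int j - int n) else 0)"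
    by (rule sum.inter_filter) simp
  also have "\<dots> = (\<Sum>j\<le>2*n. fps_const (alt_sign (int j - int n)) * fps_X ^ nat (theta_exp m a (int j - int n))) $ N"
    unfolding fps_sum_nth by (rule sum.cong) (auto simp: fps_X_power_nth)
  finally show ?thesis .
qed

lemma fps_cutoff_theta_term_mult_qbinomial:
  assumes "1 \<le> a" "a < m" "2 * N < n" "j \<le> 2 * n"
  shows "fps_cutoff (Suc N) (c * fps_X ^ nat (theta_exp m a (int j - int n)) *
      (qbinomial (fps_X ^ m) (2 * n) j * qpoch m m)) =
    fps_cutoff (Suc N) (c * fps_X ^ nat (theta_exp m a (int j - int n)))"
proof (cases "N < nat (theta_exp m a (int j - int n))")
  case True
  have "fps_cutoff (Suc N) (fps_X ^ nat (theta_exp m a (int j - int n)) *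
      (c * (qbinomial (fps_X ^ m) (2 * n) j * qpoch m m))) = 0"
    and "fps_cutoff (Suc N) (fps_X ^ nat (theta_exp m a (int j - int n)) * c) = 0"
    using True by (rule fps_cutoff_X_power_mult)+
  then show ?thesis
    by (simp add: mult_ac)
next
  case False
  have "\<bar>int j - int n\<bar> \<le> theta_exp m a (int j - int n)"
    using assms by (intro abs_le_theta_exp) simp_all
  then have "N \<le> j" "N \<le> 2 * n - j" "2 * n = j + (2 * n - j)"
    using False assms(3,4) by auto
  then have "fps_cutoff (Suc N) (qbinomial (fps_X ^ m) (2 * n) j * qpoch m m) = fps_cutoff (Suc N) 1"
    using fps_cutoff_qbinomial_mult_qpoch[of m N j "2 * n - j"] assms by simp
  then have "fps_cutoff (Suc N) (c * fps_X ^ nat (theta_exp m a (int j - int n)) *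
      (qbinomial (fps_X ^ m) (2 * n) j * qpoch m m)) =
      fps_cutoff (Suc N) (c * fps_X ^ nat (theta_exp m a (int j - int n)) * 1)"
    by (intro fps_cutoff_mult_cong refl)
  then show ?thesis
    by simp
qed

text \<open>Multiplied by \<open>(q\<^sup>m; q\<^sup>m)\<^sub>\<infinity>\<close>, the finite product agrees with the theta series up to degree
  \<open>N\<close> once \<open>n > 2N\<close>: only the terms with \<open>\<bar>j - n\<bar> \<le> N\<close> reach that degree, and for those the
  Gaussian binomial coefficient times \<open>(q\<^sup>m; q\<^sup>m)\<^sub>\<infinity>\<close> is 1 up to degree \<open>N\<close>.\<close>

theorem jacobi_triple_product:
  assumes "1 \<le> a" "a < m"
  shows "Jam a m = theta m a"
proof (rule fps_ext)
  fix N :: nat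
  define n where "n = 2 * N + 1"
  have n: "n \<ge> 1" "N \<le> n"
    unfolding n_def by simp_all
  define t where "t j = fps_const (alt_sign (int j - int n)) * fps_X ^ nat (theta_exp m a (int j - int n))" for j
  let ?E = "qpoch m m"
  have adm: "admissible_factors (\<lambda>i. 1 - fps_X ^ (c + m * i) :: real fps)" if "c \<ge> 1" for c
    using assms that by (intro admissible_qpoch_factors) simp_all
  have "fps_cutoff (Suc N) (Jam a m) = fps_cutoff (Suc N)
      ((\<Prod>i<n. 1 - fps_X ^ (a + m * i)) * (\<Prod>i<n. 1 - fps_X ^ ((m - a) + m * i)) * ?E)"
    unfolding Jam_def qpoch_eq_fps_infprod[of a] qpoch_eq_fps_infprod[of "m - a"]
    using assms n by (intro fps_cutoff_mult_cong fps_cutoff_infprod adm refl) simp_all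
  also have "\<dots> = fps_cutoff (Suc N) (\<Sum>j\<le>2*n. t j * (qbinomial (fps_X ^ m) (2*n) j * ?E))"
    unfolding finite_jacobi_triple_product[OF assms n(1)] sum_distrib_right t_def
    by (simp add: mult_ac)
  also have "\<dots> = fps_cutoff (Suc N) (\<Sum>j\<le>2*n. t j)"
    unfolding t_def using assms
    by (intro fps_cutoff_sum_cong fps_cutoff_theta_term_mult_qbinomial) (auto simp: n_def)
  finally have "fps_cutoff (Suc N) (Jam a m) = fps_cutoff (Suc N) (\<Sum>j\<le>2*n. t j)" .
  then have "Jam a m $ N = (\<Sum>j\<le>2*n. t j) $ N"
    unfolding fps_cutoff_eq_fps_cutoff_iff by blast
  then show "Jam a m $ N = theta m a $ N"
    using fps_nth_theta_eq_finite_sum[OF assms n(2)] unfolding t_def by simp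
qed

section \<open>Products of theta series as lattice sums\<close>

lemma weighted_series_nth: "weighted_series S e w $ N = (\<Sum>x\<in>{x\<in>S. e x = int N}. w x)"
  by (simp add: weighted_series_def)

lemma weighted_series_reindex:
  assumes "\<And>x. x \<in> S \<Longrightarrow> \<phi> x \<in> T" "\<And>y. y \<in> T \<Longrightarrow> \<psi> y \<in> S"
    and "\<And>x. x \<in> S \<Longrightarrow> \<psi> (\<phi> x) = x" "\<And>y. y \<in> T \<Longrightarrow> \<phi> (\<psi> y) = y"
    and "\<And>x. x \<in> S \<Longrightarrow> e' (\<phi> x) = e x" "\<And>x. x \<in> S \<Longrightarrow> w' (\<phi> x) = w x"
  shows "weighted_series S e w = weighted_series T e' w'"
proof (rule fps_ext)
  fix N
  have "e (\<psi> y) = e' y" if "y \<in> T" for y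
    using assms(2,4,5) that by metis
  then show "weighted_series S e w $ N = weighted_series T e' w' $ N"
    unfolding weighted_series_nth
    by (intro sum.reindex_bij_witness[where j = \<phi> and i = \<psi>]) (use assms in auto)
qed

lemma weighted_series_cong:
  "(\<And>x. x \<in> S \<Longrightarrow> e x = e' x) \<Longrightarrow> (\<And>x. x \<in> S \<Longrightarrow> w x = w' x) \<Longrightarrow>
    weighted_series S e w = weighted_series S e' w'"
  by (rule weighted_series_reindex[where \<phi> = id and \<psi> = id]) auto

lemma X_power_mult_weighted_series:
  assumes "\<And>x. x \<in> S \<Longrightarrow> e x \<ge> 0"
  shows "fps_X ^ c * weighted_series S e w = weighted_series S (\<lambda>x. e x + int c) w"
proof (rule fps_ext)
  fix N
  show "(fps_X ^ c * weighted_series S e w) $ N = weighted_series S (\<lambda>x. e x + int c) w $ N"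
  proof (cases "N < c")
    case True
    then have "{x\<in>S. e x + int c = int N} = {}"
      using assms by force
    then have "weighted_series S (\<lambda>x. e x + int c) w $ N = 0"
      by (simp only: weighted_series_nth sum.empty)
    then show ?thesis
      using True by (simp add: fps_X_power_mult_nth)
  next
    case False
    then have "{x\<in>S. e x + int c = int N} = {x\<in>S. e x = int (N - c)}"
      by auto
    then show ?thesis
      using False by (simp add: fps_X_power_mult_nth weighted_series_nth)
  qed
qed

definition locally_finite_exponent :: "('a \<Rightarrow> int) \<Rightarrow> bool" where
  "locally_finite_exponent e \<longleftrightarrow> (\<forall>x. e x \<ge> 0) \<and> (\<forall>N. finite {x. e x = N})"

lemma locally_finite_theta_exp:
  assumes "1 \<le> a" "a < m"
  shows "locally_finite_exponent (theta_exp m a)"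
  unfolding locally_finite_exponent_def
proof (intro conjI allI)
  fix k N
  show "theta_exp m a k \<ge> 0"
    using assms by (rule theta_exp_nonneg)
  have "{k. theta_exp m a k = N} \<subseteq> {-N..N}"
  proof
    fix k assume "k \<in> {k. theta_exp m a k = N}"
    then have "\<bar>k\<bar> \<le> N"
      using abs_le_theta_exp[OF assms, of k] by simp
    then show "k \<in> {-N..N}"
      by (simp add: abs_le_iff)
  qed
  then show "finite {k. theta_exp m a k = N}"
    by (rule finite_subset) simp
qed

lemma locally_finite_exponent_plus:
  fixes e :: "'a \<Rightarrow> int" and f :: "'b \<Rightarrow> int"
  assumes "locally_finite_exponent e" "locally_finite_exponent f"
  shows "locally_finite_exponent (\<lambda>(x, y). e x + f y)"
  unfolding locally_finite_exponent_def
proof (intro conjI allI)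
  fix p :: "'a \<times> 'b" and M
  show "0 \<le> (case p of (x, y) \<Rightarrow> e x + f y)"
    using assms by (auto simp: locally_finite_exponent_def split: prod.split)
  show "finite {p. (case p of (x, y) \<Rightarrow> e x + f y) = M}"
  proof (rule finite_subset)
    show "finite ((\<Union>i\<in>{0..M}. {x. e x = i}) \<times> (\<Union>j\<in>{0..M}. {y. f y = j}))"
      using assms by (auto simp: locally_finite_exponent_def)
    show "{p. (case p of (x, y) \<Rightarrow> e x + f y) = M} \<subseteq>
        (\<Union>i\<in>{0..M}. {x. e x = i}) \<times> (\<Union>j\<in>{0..M}. {y. f y = j})"
      using assms by (fastforce simp: locally_finite_exponent_def split: prod.splits)
  qed
qed

lemma weighted_series_mult:
  fixes e :: "'a \<Rightarrow> int" and f :: "'b \<Rightarrow> int"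
  assumes "locally_finite_exponent e" "locally_finite_exponent f"
  shows "weighted_series UNIV e w * weighted_series UNIV f v =
    weighted_series UNIV (\<lambda>(x, y). e x + f y) (\<lambda>(x, y). w x * v y)"
proof (rule fps_ext)
  fix N
  have e_nonneg: "e x \<ge> 0" and f_nonneg: "f y \<ge> 0" for x y
    using assms by (simp_all add: locally_finite_exponent_def)
  define P where "P = {p. (case p of (x, y) \<Rightarrow> e x + f y) = int N}"
  let ?h = "\<lambda>p. case p of (x, y) \<Rightarrow> w x * v y"
  have "(weighted_series UNIV e w * weighted_series UNIV f v) $ N =
      (\<Sum>i=0..N. (\<Sum>x\<in>{x. e x = int i}. w x) * (\<Sum>y\<in>{y. f y = int (N - i)}. v y))"
    by (simp add: fps_mult_nth weighted_series_def)
  also have "\<dots> = (\<Sum>i=0..N. \<Sum>p\<in>{x. e x = int i} \<times> {y. f y = int (N - i)}. ?h p)"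
    by (rule sum.cong) (auto simp: sum_product sum.cartesian_product)
  also have "\<dots> = (\<Sum>i=0..N. \<Sum>p\<in>{p\<in>P. nat (e (fst p)) = i}. ?h p)"
  proof (rule sum.cong[OF refl])
    fix i assume "i \<in> {0..N}"
    then have "{x. e x = int i} \<times> {y. f y = int (N - i)} = {p\<in>P. nat (e (fst p)) = i}"
      using e_nonneg by (force simp: P_def of_nat_diff)
    then show "(\<Sum>p\<in>{x. e x = int i} \<times> {y. f y = int (N - i)}. ?h p) =
        (\<Sum>p\<in>{p\<in>P. nat (e (fst p)) = i}. ?h p)"
      by simp
  qed
  also have "\<dots> = (\<Sum>p\<in>P. ?h p)"
  proof (rule sum.group)
    show "finite P"
      using locally_finite_exponent_plus[OF assms]
      unfolding P_def locally_finite_exponent_def by blast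
    show "(\<lambda>p. nat (e (fst p))) ` P \<subseteq> {0..N}"
    proof
      fix i assume "i \<in> (\<lambda>p. nat (e (fst p))) ` P"
      then obtain x y where "e x + f y = int N" "i = nat (e x)"
        unfolding P_def by auto
      then show "i \<in> {0..N}"
        using f_nonneg[of y] by auto
    qed
  qed simp
  also have "\<dots> = weighted_series UNIV (\<lambda>(x, y). e x + f y) (\<lambda>(x, y). w x * v y) $ N"
    by (simp add: weighted_series_def P_def)
  finally show "(weighted_series UNIV e w * weighted_series UNIV f v) $ N =
      weighted_series UNIV (\<lambda>(x, y). e x + f y) (\<lambda>(x, y). w x * v y) $ N" .
qed

definition quad_exp :: "nat \<Rightarrow> nat \<Rightarrow> nat \<Rightarrow> nat \<Rightarrow> int \<Rightarrow> int \<times> int \<times> int \<times> int \<Rightarrow> int" where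
  "quad_exp a b c d s = (\<lambda>(n1, n2, n3, n4).
     theta_exp 11 a n1 + theta_exp 11 b n2 + theta_exp 11 c n3 + theta_exp 11 d n4 + s)"

definition coord_sum :: "int \<times> int \<times> int \<times> int \<Rightarrow> int" where
  "coord_sum = (\<lambda>(n1, n2, n3, n4). n1 + n2 + n3 + n4)"

definition quad_sign :: "int \<times> int \<times> int \<times> int \<Rightarrow> real" where
  "quad_sign n = alt_sign (coord_sum n)"

lemma X_power_mult_theta_product:
  assumes "1 \<le> a" "a < 11" "1 \<le> b" "b < 11" "1 \<le> c" "c < 11" "1 \<le> d" "d < 11"
  shows "fps_X ^ s * (theta 11 a * (theta 11 b * (theta 11 c * theta 11 d))) =
    weighted_series UNIV (quad_exp a b c d (int s)) quad_sign"
proof -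
  have exp: "locally_finite_exponent (theta_exp 11 x)" if "1 \<le> x" "x < 11" for x
    using that by (rule locally_finite_theta_exp)
  have "fps_X ^ s * (theta 11 a * (theta 11 b * (theta 11 c * theta 11 d))) = fps_X ^ s *
      weighted_series UNIV (\<lambda>(n1, n2, n3, n4). theta_exp 11 a n1 + (theta_exp 11 b n2 + (theta_exp 11 c n3 + theta_exp 11 d n4)))
        (\<lambda>(n1, n2, n3, n4). alt_sign n1 * (alt_sign n2 * (alt_sign n3 * alt_sign n4)))"
    unfolding theta_def using assms
    by (simp add: exp weighted_series_mult locally_finite_exponent_plus, intro weighted_series_cong)
      (auto split: prod.splits)
  also have "\<dots> = weighted_series UNIV
      (\<lambda>n. (case n of (n1, n2, n3, n4) \<Rightarrow>
        theta_exp 11 a n1 + (theta_exp 11 b n2 + (theta_exp 11 c n3 + theta_exp 11 d n4))) + int s)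
      (\<lambda>(n1, n2, n3, n4). alt_sign n1 * (alt_sign n2 * (alt_sign n3 * alt_sign n4)))"
    using assms by (intro X_power_mult_weighted_series) (auto intro!: add_nonneg_nonneg theta_exp_nonneg)
  also have "\<dots> = weighted_series UNIV (quad_exp a b c d (int s)) quad_sign"
    by (rule weighted_series_cong) (auto simp: quad_exp_def quad_sign_def coord_sum_def alt_sign_add algebra_simps)
  finally show ?thesis .
qed

section \<open>Three quartic identities\<close>

definition count_series :: "(int \<times> int \<times> int \<times> int \<Rightarrow> int) \<Rightarrow> real fps" where
  "count_series F = weighted_series UNIV F (\<lambda>_. 1)"

text \<open>\<^term>\<open>parity_lift p\<close> maps \<open>\<int>\<^sup>4\<close> bijectively onto the quadruples whose coordinate sum is
  congruent to \<^term>\<open>p\<close> modulo 2, for \<^term>\<open>p \<in> {0, 1}\<close>.\<close>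

definition parity_lift :: "int \<Rightarrow> int \<times> int \<times> int \<times> int \<Rightarrow> int \<times> int \<times> int \<times> int" where
  "parity_lift p = (\<lambda>(n1, n2, n3, t). (n1, n2, n3, 2 * t + p - n1 - n2 - n3))"

lemma count_series_reindex:
  assumes "\<And>u. \<psi> (\<phi> u) = u" "\<And>v. \<phi> (\<psi> v) = v" "\<And>u. F' (\<phi> u) = F u"
  shows "count_series F = count_series F'"
  unfolding count_series_def
  by (rule weighted_series_reindex[where \<phi> = \<phi> and \<psi> = \<psi>]) (use assms in auto)

lemma count_series_parity_lift:
  assumes "p \<in> {0, 1}"
  shows "count_series (\<lambda>u. E (parity_lift p u)) = weighted_series {n. coord_sum n mod 2 = p} E (\<lambda>_. 1)"
  unfolding count_series_def
proof (rule weighted_series_reindex[where \<phi> = "parity_lift p"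
    and \<psi> = "\<lambda>(n1, n2, n3, n4). (n1, n2, n3, coord_sum (n1, n2, n3, n4) div 2)"])
  fix u :: "int \<times> int \<times> int \<times> int"
  show "parity_lift p u \<in> {n. coord_sum n mod 2 = p}"
    and "(case parity_lift p u of (n1, n2, n3, n4) \<Rightarrow> (n1, n2, n3, coord_sum (n1, n2, n3, n4) div 2)) = u"
    using assms by (cases u; auto simp: parity_lift_def coord_sum_def)+
next
  fix n :: "int \<times> int \<times> int \<times> int"
  assume n: "n \<in> {n. coord_sum n mod 2 = p}"
  obtain n1 n2 n3 n4 where nn: "n = (n1, n2, n3, n4)"
    by (cases n) auto
  have "n1 + n2 + n3 + n4 = 2 * ((n1 + n2 + n3 + n4) div 2) + p"
    using n nn div_mult_mod_eq[of "n1 + n2 + n3 + n4" 2] by (simp add: coord_sum_def)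
  then show "parity_lift p (case n of (n1, n2, n3, n4) \<Rightarrow> (n1, n2, n3, coord_sum (n1, n2, n3, n4) div 2)) = n"
    unfolding nn parity_lift_def coord_sum_def by simp
qed auto

lemma weighted_series_quad_sign_split:
  assumes "\<And>N. finite {n. E n = N}"
  shows "weighted_series UNIV E quad_sign =
    count_series (\<lambda>u. E (parity_lift 0 u)) - count_series (\<lambda>u. E (parity_lift 1 u))"
proof (rule fps_ext)
  fix N
  define L where "L p = {n \<in> {n. coord_sum n mod 2 = p}. E n = int N}" for p
  have split: "{n \<in> UNIV. E n = int N} = L 0 \<union> L 1"
  proof (intro set_eqI iffI)
    fix n assume n: "n \<in> {n \<in> UNIV. E n = int N}"
    have "coord_sum n mod 2 = 0 \<or> coord_sum n mod 2 = 1"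
      using pos_mod_sign[of 2 "coord_sum n"] pos_mod_bound[of 2 "coord_sum n"] by linarith
    then show "n \<in> L 0 \<union> L 1"
      using n unfolding L_def by blast
  next
    fix n assume "n \<in> L 0 \<union> L 1"
    then show "n \<in> {n \<in> UNIV. E n = int N}"
      unfolding L_def by blast
  qed
  have "finite (L p)" for p
    using assms[of "int N"] by (rule finite_subset[rotated]) (auto simp: L_def)
  moreover have "L 0 \<inter> L 1 = {}"
    by (auto simp: L_def)
  ultimately have "weighted_series UNIV E quad_sign $ N = (\<Sum>n\<in>L 0. quad_sign n) + (\<Sum>n\<in>L 1. quad_sign n)"
    unfolding weighted_series_nth split by (intro sum.union_disjoint) auto
  also have "(\<Sum>n\<in>L 0. quad_sign n) = (\<Sum>n\<in>L 0. 1)"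
    by (rule sum.cong) (auto simp: L_def quad_sign_def alt_sign_def even_iff_mod_2_eq_zero)
  also have "(\<Sum>n\<in>L 1. quad_sign n) = - (\<Sum>n\<in>L 1. 1)"
    unfolding sum_negf[symmetric]
    by (rule sum.cong) (auto simp: L_def quad_sign_def alt_sign_def even_iff_mod_2_eq_zero)
  also have "(\<Sum>n\<in>L 0. 1) + - (\<Sum>n\<in>L 1. 1) =
      (count_series (\<lambda>u. E (parity_lift 0 u)) - count_series (\<lambda>u. E (parity_lift 1 u))) $ N"
    by (simp add: count_series_parity_lift weighted_series_nth L_def)
  finally show "weighted_series UNIV E quad_sign $ N =
      (count_series (\<lambda>u. E (parity_lift 0 u)) - count_series (\<lambda>u. E (parity_lift 1 u))) $ N" .
qed

lemma finite_quad_exp_level_set: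
  assumes "1 \<le> a" "a < 11" "1 \<le> b" "b < 11" "1 \<le> c" "c < 11" "1 \<le> d" "d < 11" "s \<ge> 0"
  shows "finite {n. quad_exp a b c d s n = N}"
proof (rule finite_subset)
  show "{n. quad_exp a b c d s n = N} \<subseteq> {-N..N} \<times> {-N..N} \<times> {-N..N} \<times> {-N..N}"
  proof
    fix n assume n: "n \<in> {n. quad_exp a b c d s n = N}"
    obtain n1 n2 n3 n4 where nn: "n = (n1, n2, n3, n4)"
      by (cases n) auto
    have "\<bar>n1\<bar> \<le> theta_exp 11 a n1" "\<bar>n2\<bar> \<le> theta_exp 11 b n2"
      and "\<bar>n3\<bar> \<le> theta_exp 11 c n3" "\<bar>n4\<bar> \<le> theta_exp 11 d n4"
      using abs_le_theta_exp assms by auto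
    moreover have "quad_exp a b c d s n =
        theta_exp 11 a n1 + theta_exp 11 b n2 + theta_exp 11 c n3 + theta_exp 11 d n4 + s"
      unfolding nn quad_exp_def by simp
    ultimately have "\<bar>n1\<bar> \<le> N" "\<bar>n2\<bar> \<le> N" "\<bar>n3\<bar> \<le> N" "\<bar>n4\<bar> \<le> N"
      using n assms(9) by auto
    then show "n \<in> {-N..N} \<times> {-N..N} \<times> {-N..N} \<times> {-N..N}"
      unfolding nn by (auto simp: abs_le_iff)
  qed
qed simp

text \<open>Clearing the denominator of the exponent turns each of the substitutions below into a polynomial
  identity.\<close>

lemma quad_exp_Pair:
  "quad_exp a b c d s (n1, n2, n3, n4) =
    (11 * (n1 * (n1 - 1)) + 2 * int a * n1 + 11 * (n2 * (n2 - 1)) + 2 * int b * n2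
     + 11 * (n3 * (n3 - 1)) + 2 * int c * n3 + 11 * (n4 * (n4 - 1)) + 2 * int d * n4 + 2 * s) div 2"
proof -
  have "2 * quad_exp a b c d s (n1, n2, n3, n4) =
      2 * theta_exp 11 a n1 + 2 * theta_exp 11 b n2 + 2 * theta_exp 11 c n3 + 2 * theta_exp 11 d n4 + 2 * s"
    by (simp add: quad_exp_def algebra_simps)
  then have "2 * quad_exp a b c d s (n1, n2, n3, n4) =
      11 * (n1 * (n1 - 1)) + 2 * int a * n1 + 11 * (n2 * (n2 - 1)) + 2 * int b * n2
      + 11 * (n3 * (n3 - 1)) + 2 * int c * n3 + 11 * (n4 * (n4 - 1)) + 2 * int d * n4 + 2 * s"
    unfolding double_theta_exp by simp
  then show ?thesis
    by (metis nonzero_mult_div_cancel_left zero_neq_numeral)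
qed

text \<open>Each identity \<open>A - B = C\<close> between sign-weighted sums over \<open>\<int>\<^sup>4\<close> is proved by splitting
  \<open>A\<close>, \<open>B\<close>, \<open>C\<close> into their even and odd parts and matching these parts in pairs by
  exponent-preserving bijections of \<open>\<int>\<^sup>4\<close>, given by the substitutions \<open>\<phi>\<close> and their
  inverses \<open>\<psi>\<close>.\<close>

lemma quartic_1_AC:
  "count_series (\<lambda>u. quad_exp 2 3 4 4 0 (parity_lift 0 u)) =
    count_series (\<lambda>u. quad_exp 1 4 5 5 0 (parity_lift 0 u))"
  by (rule count_series_reindex[where
        \<phi> = "\<lambda>(n1, n2, n3, t). (t, n1 + n2 - t, - n2 - n3 + t, n1)" and
        \<psi> = "\<lambda>(n1, n2, n3, t). (t, n1 + n2 - t, - n2 - n3 + t, n1)"])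
    (auto simp: parity_lift_def quad_exp_Pair algebra_simps)

lemma quartic_1_AB:
  "count_series (\<lambda>u. quad_exp 2 3 4 4 0 (parity_lift 1 u)) =
    count_series (\<lambda>u. quad_exp 1 2 3 3 1 (parity_lift 1 u))"
  by (rule count_series_reindex[where
        \<phi> = "\<lambda>(n1, n2, n3, t). (n1 - t, n2 - t, - n1 - n2 - n3 + t + 1, - t)" and
        \<psi> = "\<lambda>(n1, n2, n3, t). (n1 - t, n2 - t, - n1 - n2 - n3 + t + 1, - t)"])
    (auto simp: parity_lift_def quad_exp_Pair algebra_simps)

lemma quartic_1_BC:
  "count_series (\<lambda>u. quad_exp 1 2 3 3 1 (parity_lift 0 u)) =
    count_series (\<lambda>u. quad_exp 1 4 5 5 0 (parity_lift 1 u))"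
  by (rule count_series_reindex[where
        \<phi> = "\<lambda>(n1, n2, n3, t). (- t + 1, n1 + n2 - t, - n2 - n3 + t, n1 - t)" and
        \<psi> = "\<lambda>(n1, n2, n3, t). (- n1 + t + 1, n2 - t, - n1 - n2 - n3 + t + 1, - n1 + 1)"])
    (auto simp: parity_lift_def quad_exp_Pair algebra_simps)

lemma quartic_identity_1:
  "weighted_series UNIV (quad_exp 2 3 4 4 0) quad_sign - weighted_series UNIV (quad_exp 1 2 3 3 1) quad_sign =
    weighted_series UNIV (quad_exp 1 4 5 5 0) quad_sign"
  using quartic_1_AC quartic_1_AB quartic_1_BC
  by (simp add: weighted_series_quad_sign_split[OF finite_quad_exp_level_set] algebra_simps)

lemma quartic_2_AB:
  "count_series (\<lambda>u. quad_exp 2 2 3 5 0 (parity_lift 0 u)) =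
    count_series (\<lambda>u. quad_exp 1 3 4 4 0 (parity_lift 0 u))"
  by (rule count_series_reindex[where
        \<phi> = "\<lambda>(n1, n2, n3, t). (n1 + n2 + n3 - t, - n3 + t, - n2 + t, t)" and
        \<psi> = "\<lambda>(n1, n2, n3, t). (n1 + n2 + n3 - t, - n3 + t, - n2 + t, t)"])
    (auto simp: parity_lift_def quad_exp_Pair algebra_simps)

lemma quartic_2_AC:
  "count_series (\<lambda>u. quad_exp 2 2 3 5 0 (parity_lift 1 u)) =
    count_series (\<lambda>u. quad_exp 1 1 2 5 1 (parity_lift 1 u))"
  by (rule count_series_reindex[where
        \<phi> = "\<lambda>(n1, n2, n3, t). (- n2 - n3 + t + 1, - n1 - n3 + t + 1, - n1 - n2 + t + 1, - n1 - n2 - n3 + t + 1)" and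
        \<psi> = "\<lambda>(n1, n2, n3, t). (n1 - t, n2 - t, n3 - t, n1 + n2 + n3 - 2 * t - 1)"])
    (auto simp: parity_lift_def quad_exp_Pair algebra_simps)

lemma quartic_2_BC:
  "count_series (\<lambda>u. quad_exp 1 3 4 4 0 (parity_lift 1 u)) =
    count_series (\<lambda>u. quad_exp 1 1 2 5 1 (parity_lift 0 u))"
  by (rule count_series_reindex[where
        \<phi> = "\<lambda>(n1, n2, n3, t). (n2 + n3 - t, - n1 - n3 + t + 1, - n1 - n2 + t + 1, - n1 + 1)" and
        \<psi> = "\<lambda>(n1, n2, n3, t). (- t + 1, n1 + n2 - t, n1 + n3 - t, n1 + n2 + n3 - 2 * t)"])
    (auto simp: parity_lift_def quad_exp_Pair algebra_simps)

lemma quartic_identity_2: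
  "weighted_series UNIV (quad_exp 2 2 3 5 0) quad_sign - weighted_series UNIV (quad_exp 1 3 4 4 0) quad_sign =
    weighted_series UNIV (quad_exp 1 1 2 5 1) quad_sign"
  using quartic_2_AB quartic_2_AC quartic_2_BC
  by (simp add: weighted_series_quad_sign_split[OF finite_quad_exp_level_set] algebra_simps)

lemma quartic_3_AB:
  "count_series (\<lambda>u. quad_exp 3 3 4 5 0 (parity_lift 0 u)) =
    count_series (\<lambda>u. quad_exp 2 4 5 5 0 (parity_lift 0 u))"
  by (rule count_series_reindex[where
        \<phi> = "\<lambda>(n1, n2, n3, t). (t, n1 + n2 - t, n1 + n3 - t, n1 + n2 + n3 - t)" and
        \<psi> = "\<lambda>(n1, n2, n3, t). (n1 + n2 + n3 - t, - n3 + t, - n2 + t, n1)"])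
    (auto simp: parity_lift_def quad_exp_Pair algebra_simps)

lemma quartic_3_AC:
  "count_series (\<lambda>u. quad_exp 3 3 4 5 0 (parity_lift 1 u)) =
    count_series (\<lambda>u. quad_exp 1 1 2 3 2 (parity_lift 1 u))"
  by (rule count_series_reindex[where
        \<phi> = "\<lambda>(n1, n2, n3, t). (n2 - t, n1 - t, n3 - t, - t)" and
        \<psi> = "\<lambda>(n1, n2, n3, t). (n2 - t, n1 - t, n3 - t, - t)"])
    (auto simp: parity_lift_def quad_exp_Pair algebra_simps)

lemma quartic_3_BC:
  "count_series (\<lambda>u. quad_exp 2 4 5 5 0 (parity_lift 1 u)) =
    count_series (\<lambda>u. quad_exp 1 1 2 3 2 (parity_lift 0 u))"
  by (rule count_series_reindex[where
        \<phi> = "\<lambda>(n1, n2, n3, t). (n2 + n3 - t, - n1 - n3 + t + 1, - n1 - n2 + t + 1, - n1 + 1)" and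
        \<psi> = "\<lambda>(n1, n2, n3, t). (- t + 1, n1 + n2 - t, n1 + n3 - t, n1 + n2 + n3 - 2 * t)"])
    (auto simp: parity_lift_def quad_exp_Pair algebra_simps)

lemma quartic_identity_3:
  "weighted_series UNIV (quad_exp 3 3 4 5 0) quad_sign - weighted_series UNIV (quad_exp 2 4 5 5 0) quad_sign =
    weighted_series UNIV (quad_exp 1 1 2 3 2) quad_sign"
  using quartic_3_AB quartic_3_AC quartic_3_BC
  by (simp add: weighted_series_quad_sign_split[OF finite_quad_exp_level_set] algebra_simps)

lemma Pq_eq_theta: "1 \<le> a \<Longrightarrow> a < 11 \<Longrightarrow> Pq a = theta 11 a"
  unfolding Pq_def by (rule jacobi_triple_product) auto

lemma theta_product_eq_weighted_series:
  assumes "1 \<le> a" "a < 11" "1 \<le> b" "b < 11" "1 \<le> c" "c < 11" "1 \<le> d" "d < 11"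
  shows "theta 11 a * (theta 11 b * (theta 11 c * theta 11 d)) = weighted_series UNIV (quad_exp a b c d 0) quad_sign"
  using X_power_mult_theta_product[OF assms, of 0] by simp

lemma Pq_identity_1: "Pq 2 * Pq 3 * Pq 4 ^ 2 - fps_X * Pq 1 * Pq 2 * Pq 3 ^ 2 = Pq 1 * Pq 4 * Pq 5 ^ 2"
proof -
  have "Pq 2 * Pq 3 * Pq 4 ^ 2 - fps_X * Pq 1 * Pq 2 * Pq 3 ^ 2
      = theta 11 2 * (theta 11 3 * (theta 11 4 * theta 11 4)) - fps_X ^ 1 * (theta 11 1 * (theta 11 2 * (theta 11 3 * theta 11 3)))"
    by (simp add: Pq_eq_theta power2_eq_square mult_ac)
  also have "\<dots> = weighted_series UNIV (quad_exp 2 3 4 4 0) quad_sign - weighted_series UNIV (quad_exp 1 2 3 3 1) quad_sign"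
    using theta_product_eq_weighted_series[of 2 3 4 4] X_power_mult_theta_product[of 1 2 3 3 1] by simp
  also have "\<dots> = weighted_series UNIV (quad_exp 1 4 5 5 0) quad_sign" by (rule quartic_identity_1)
  also have "\<dots> = Pq 1 * Pq 4 * Pq 5 ^ 2"
    using theta_product_eq_weighted_series[of 1 4 5 5] by (simp add: Pq_eq_theta power2_eq_square mult_ac)
  finally show ?thesis .
qed

lemma Pq_identity_2: "Pq 2 ^ 2 * Pq 3 * Pq 5 - Pq 1 * Pq 3 * Pq 4 ^ 2 = fps_X * Pq 1 ^ 2 * Pq 2 * Pq 5"
proof -
  have "Pq 2 ^ 2 * Pq 3 * Pq 5 - Pq 1 * Pq 3 * Pq 4 ^ 2
      = theta 11 2 * (theta 11 2 * (theta 11 3 * theta 11 5)) - theta 11 1 * (theta 11 3 * (theta 11 4 * theta 11 4))"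
    by (simp add: Pq_eq_theta power2_eq_square mult_ac)
  also have "\<dots> = weighted_series UNIV (quad_exp 2 2 3 5 0) quad_sign - weighted_series UNIV (quad_exp 1 3 4 4 0) quad_sign"
    using theta_product_eq_weighted_series[of 2 2 3 5] theta_product_eq_weighted_series[of 1 3 4 4] by simp
  also have "\<dots> = weighted_series UNIV (quad_exp 1 1 2 5 1) quad_sign" by (rule quartic_identity_2)
  also have "\<dots> = fps_X ^ 1 * (theta 11 1 * (theta 11 1 * (theta 11 2 * theta 11 5)))"
    using X_power_mult_theta_product[of 1 1 2 5 1] by simp
  also have "\<dots> = fps_X * Pq 1 ^ 2 * Pq 2 * Pq 5"
    by (simp add: Pq_eq_theta power2_eq_square mult_ac)
  finally show ?thesis .
qed

lemma Pq_identity_3: "Pq 3 ^ 2 * Pq 4 * Pq 5 - Pq 2 * Pq 4 * Pq 5 ^ 2 = fps_X ^ 2 * Pq 1 ^ 2 * Pq 2 * Pq 3"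
proof -
  have "Pq 3 ^ 2 * Pq 4 * Pq 5 - Pq 2 * Pq 4 * Pq 5 ^ 2
      = theta 11 3 * (theta 11 3 * (theta 11 4 * theta 11 5)) - theta 11 2 * (theta 11 4 * (theta 11 5 * theta 11 5))"
    by (simp add: Pq_eq_theta power2_eq_square mult_ac)
  also have "\<dots> = weighted_series UNIV (quad_exp 3 3 4 5 0) quad_sign - weighted_series UNIV (quad_exp 2 4 5 5 0) quad_sign"
    using theta_product_eq_weighted_series[of 3 3 4 5] theta_product_eq_weighted_series[of 2 4 5 5] by simp
  also have "\<dots> = weighted_series UNIV (quad_exp 1 1 2 3 2) quad_sign" by (rule quartic_identity_3)
  also have "\<dots> = fps_X ^ 2 * (theta 11 1 * (theta 11 1 * (theta 11 2 * theta 11 3)))"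
    using X_power_mult_theta_product[of 1 1 2 3 2] by simp
  also have "\<dots> = fps_X ^ 2 * Pq 1 ^ 2 * Pq 2 * Pq 3"
    by (simp add: Pq_eq_theta power2_eq_square mult_ac)
  finally show ?thesis .
qed

section \<open>The coefficient inequalities\<close>

lemma eq_inverse_mult_if_mult_eq:
  fixes u y z :: "'a::field fps"
  assumes "u $ 0 \<noteq> 0" "u * y = z"
  shows "y = inverse u * z"
proof -
  have "inverse u * z = (inverse u * u) * y"
    using assms(2) by (simp add: mult.assoc)
  then show ?thesis
    using assms(1) by (simp add: inverse_mult_eq_1)
qed

lemma Pq_eq_qpoch:
  "Pq 1 = qpoch 1 11 * qpoch 10 11 * qpoch 11 11" "Pq 2 = qpoch 2 11 * qpoch 9 11 * qpoch 11 11"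
  "Pq 3 = qpoch 3 11 * qpoch 8 11 * qpoch 11 11" "Pq 4 = qpoch 4 11 * qpoch 7 11 * qpoch 11 11"
  "Pq 5 = qpoch 5 11 * qpoch 6 11 * qpoch 11 11"
  by (simp_all add: Pq_def Jam_def)

lemma fps_nth_Pq_0: "1 \<le> a \<Longrightarrow> a \<le> 10 \<Longrightarrow> Pq a $ 0 = 1"
  by (simp add: Pq_def Jam_def fps_nth_qpoch_0)

lemma qpoch_11_11_split: "qpoch 11 11 = qpoch 11 22 * qpoch 22 22"
  using qpoch_split_parity[of 11] by simp

lemma Jm_11_split: "Jm 11 = qpoch 11 22 * qpoch 22 22"
  unfolding Jm_def by (rule qpoch_11_11_split)

lemma inverse_Jm_1: "inverse (Jm 1) =
    inverse (qpoch 1 11) * inverse (qpoch 2 11) * inverse (qpoch 3 11) * inverse (qpoch 4 11) *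
    inverse (qpoch 5 11) * inverse (qpoch 6 11) * inverse (qpoch 7 11) * inverse (qpoch 8 11) *
    inverse (qpoch 9 11) * inverse (qpoch 10 11) * inverse (qpoch 11 11)"
  using qpoch_one_one_dissect[of 11]
  by (simp add: Jm_def fps_inverse_mult eval_nat_numeral mult_ac)

lemma fps_nonneg_inverse_Jm_1: "fps_nonneg (inverse (Jm 1))"
  unfolding Jm_def by (rule fps_nonneg_inverse_qpoch) simp_all

lemma Jm_1_mult_bracket:
  "Jm 1 * bracket c1 c2 c3 c4 c5 = Jm 11 ^ 2 * inverse (Jm 1) ^ 2 *
     (fps_const c1 * Pq 5 ^ 2 * Pq 4 + fps_const c2 * fps_X ^ 2 * Pq 1 ^ 2 * Pq 3
      + fps_const c3 * fps_X * Pq 4 ^ 2 * Pq 1 + fps_const c4 * fps_X * Pq 2 ^ 2 * Pq 5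
      + fps_const c5 * fps_X * Pq 3 ^ 2 * Pq 2)"
proof -
  have "Jm 1 * inverse (Jm 1) = 1"
    unfolding Jm_def by (rule qpoch_mult_inverse) simp_all
  then show ?thesis
    unfolding bracket_def fps_inverse_power
    by (simp add: power2_eq_square power3_eq_cube mult.assoc mult.left_commute[of "Jm 1"])
qed

definition odd_quotient :: "nat \<Rightarrow> real fps" where
  "odd_quotient a = qpoch 11 22 * inverse (qpoch a 11) * inverse (qpoch (11 - a) 11)"

definition even_quotient :: "nat \<Rightarrow> real fps" where
  "even_quotient a = qpoch 22 22 * inverse (qpoch a 11) * inverse (qpoch (11 - a) 11)"

lemma fps_nonneg_odd_quotient: "1 \<le> a \<Longrightarrow> a \<le> 10 \<Longrightarrow> fps_nonneg (odd_quotient a)"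
  using fps_nonneg_qpoch_odd_quotient[of a "11 - a" 11] by (simp add: odd_quotient_def)

lemma fps_nonneg_even_quotient: "1 \<le> a \<Longrightarrow> a \<le> 10 \<Longrightarrow> fps_nonneg (even_quotient a)"
  using fps_nonneg_qpoch_even_quotient[of a "11 - a" 11] by (simp add: even_quotient_def)

text \<open>In each of the following normalisations the parenthesised factors on the right equal 1; with
  them written out, both sides are the same product up to associativity and commutativity.\<close>

lemma Jm_1_bracket_difference_23:
  "Jm 1 * bracket 0 0 1 0 0 - Jm 1 * bracket 0 1 0 0 0 =
    fps_X * odd_quotient 2 ^ 2 * even_quotient 2 * even_quotient 3 ^ 2 * odd_quotient 3 *
    inverse (qpoch 4 11) * inverse (qpoch 7 11)"
proof -
  define D where "D = Pq 4 ^ 2 - fps_X * Pq 1 * Pq 3"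
  have "Pq 2 * Pq 3 * D = Pq 1 * Pq 4 * Pq 5 ^ 2"
    unfolding D_def using Pq_identity_1 by (simp add: algebra_simps power2_eq_square)
  then have D: "D = inverse (Pq 2) * inverse (Pq 3) * (Pq 1 * Pq 4 * Pq 5 ^ 2)"
    by (subst eq_inverse_mult_if_mult_eq[of "Pq 2 * Pq 3"]) (auto simp: fps_nth_Pq_0 fps_inverse_mult)
  have "Jm 1 * bracket 0 0 1 0 0 - Jm 1 * bracket 0 1 0 0 0 = Jm 11 ^ 2 * inverse (Jm 1) ^ 2 * fps_X * Pq 1 * D"
    unfolding Jm_1_mult_bracket D_def by (simp add: algebra_simps power2_eq_square)
  also have "\<dots> = (qpoch 1 11 * inverse (qpoch 1 11)) ^ 2 * (qpoch 4 11 * inverse (qpoch 4 11)) *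
      (qpoch 5 11 * inverse (qpoch 5 11)) ^ 2 * (qpoch 6 11 * inverse (qpoch 6 11)) ^ 2 *
      (qpoch 7 11 * inverse (qpoch 7 11)) * (qpoch 10 11 * inverse (qpoch 10 11)) ^ 2 *
      (qpoch 11 11 * inverse (qpoch 11 11)) ^ 4 *
      (fps_X * odd_quotient 2 ^ 2 * even_quotient 2 * even_quotient 3 ^ 2 * odd_quotient 3 *
       inverse (qpoch 4 11) * inverse (qpoch 7 11))"
    unfolding D inverse_Jm_1 Pq_eq_qpoch fps_inverse_mult Jm_11_split qpoch_11_11_split
      odd_quotient_def[of 2, simplified] odd_quotient_def[of 3, simplified]
      even_quotient_def[of 2, simplified] even_quotient_def[of 3, simplified]
    by (simp only: mult_ac power2_eq_square power3_eq_cube power4_eq_xxxx)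
  also have "\<dots> = fps_X * odd_quotient 2 ^ 2 * even_quotient 2 * even_quotient 3 ^ 2 * odd_quotient 3 *
      inverse (qpoch 4 11) * inverse (qpoch 7 11)"
    by (simp add: qpoch_mult_inverse)
  finally show ?thesis .
qed

lemma Jm_1_bracket_difference_34:
  "Jm 1 * bracket 0 0 0 1 0 - Jm 1 * bracket 0 0 1 0 0 =
    fps_X ^ 2 * odd_quotient 3 ^ 2 * even_quotient 3 * even_quotient 4 * odd_quotient 4 * even_quotient 2 *
    inverse (qpoch 5 11) * inverse (qpoch 6 11)"
proof -
  define D where "D = Pq 2 ^ 2 * Pq 5 - Pq 1 * Pq 4 ^ 2"
  have "Pq 3 * D = fps_X * Pq 1 ^ 2 * Pq 2 * Pq 5"
    unfolding D_def using Pq_identity_2 by (simp add: algebra_simps power2_eq_square)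
  then have D: "D = inverse (Pq 3) * (fps_X * Pq 1 ^ 2 * Pq 2 * Pq 5)"
    by (subst eq_inverse_mult_if_mult_eq[of "Pq 3"]) (auto simp: fps_nth_Pq_0)
  have "Jm 1 * bracket 0 0 0 1 0 - Jm 1 * bracket 0 0 1 0 0 = Jm 11 ^ 2 * inverse (Jm 1) ^ 2 * fps_X * D"
    unfolding Jm_1_mult_bracket D_def by (simp add: algebra_simps power2_eq_square)
  also have "\<dots> = (qpoch 1 11 * inverse (qpoch 1 11)) ^ 2 * (qpoch 10 11 * inverse (qpoch 10 11)) ^ 2 *
      (qpoch 2 11 * inverse (qpoch 2 11)) * (qpoch 9 11 * inverse (qpoch 9 11)) *
      (qpoch 5 11 * inverse (qpoch 5 11)) * (qpoch 6 11 * inverse (qpoch 6 11)) *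
      (qpoch 11 11 * inverse (qpoch 11 11)) ^ 3 *
      (fps_X ^ 2 * odd_quotient 3 ^ 2 * even_quotient 3 * even_quotient 4 * odd_quotient 4 * even_quotient 2 *
       inverse (qpoch 5 11) * inverse (qpoch 6 11))"
    unfolding D inverse_Jm_1 Pq_eq_qpoch fps_inverse_mult Jm_11_split qpoch_11_11_split
      odd_quotient_def[of 3, simplified] odd_quotient_def[of 4, simplified]
      even_quotient_def[of 2, simplified] even_quotient_def[of 3, simplified] even_quotient_def[of 4, simplified]
    by (simp only: mult_ac power2_eq_square power3_eq_cube power4_eq_xxxx)
  also have "\<dots> = fps_X ^ 2 * odd_quotient 3 ^ 2 * even_quotient 3 * even_quotient 4 * odd_quotient 4 *
      even_quotient 2 * inverse (qpoch 5 11) * inverse (qpoch 6 11)"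
    by (simp add: qpoch_mult_inverse)
  finally show ?thesis .
qed

lemma Jm_1_bracket_difference_45:
  "Jm 1 * bracket 0 0 0 0 1 - Jm 1 * bracket 0 0 0 1 0 =
    fps_X ^ 3 * odd_quotient 4 ^ 2 * even_quotient 4 * even_quotient 5 ^ 2 * odd_quotient 5 *
    inverse (qpoch 3 11) * inverse (qpoch 8 11)"
proof -
  define D where "D = Pq 3 ^ 2 - Pq 2 * Pq 5"
  have "Pq 4 * Pq 5 * D = fps_X ^ 2 * Pq 1 ^ 2 * Pq 2 * Pq 3"
    unfolding D_def using Pq_identity_3 by (simp add: algebra_simps power2_eq_square)
  then have D: "D = inverse (Pq 4) * inverse (Pq 5) * (fps_X ^ 2 * Pq 1 ^ 2 * Pq 2 * Pq 3)"
    by (subst eq_inverse_mult_if_mult_eq[of "Pq 4 * Pq 5"]) (auto simp: fps_nth_Pq_0 fps_inverse_mult)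
  have "Jm 1 * bracket 0 0 0 0 1 - Jm 1 * bracket 0 0 0 1 0 = Jm 11 ^ 2 * inverse (Jm 1) ^ 2 * fps_X * Pq 2 * D"
    unfolding Jm_1_mult_bracket D_def by (simp add: algebra_simps power2_eq_square)
  also have "\<dots> = (qpoch 1 11 * inverse (qpoch 1 11)) ^ 2 * (qpoch 10 11 * inverse (qpoch 10 11)) ^ 2 *
      (qpoch 2 11 * inverse (qpoch 2 11)) ^ 2 * (qpoch 9 11 * inverse (qpoch 9 11)) ^ 2 *
      (qpoch 3 11 * inverse (qpoch 3 11)) * (qpoch 8 11 * inverse (qpoch 8 11)) *
      (qpoch 11 11 * inverse (qpoch 11 11)) ^ 4 *
      (fps_X ^ 3 * odd_quotient 4 ^ 2 * even_quotient 4 * even_quotient 5 ^ 2 * odd_quotient 5 *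
       inverse (qpoch 3 11) * inverse (qpoch 8 11))"
    unfolding D inverse_Jm_1 Pq_eq_qpoch fps_inverse_mult Jm_11_split qpoch_11_11_split
      odd_quotient_def[of 4, simplified] odd_quotient_def[of 5, simplified]
      even_quotient_def[of 4, simplified] even_quotient_def[of 5, simplified]
    by (simp only: mult_ac power2_eq_square power3_eq_cube power4_eq_xxxx)
  also have "\<dots> = fps_X ^ 3 * odd_quotient 4 ^ 2 * even_quotient 4 * even_quotient 5 ^ 2 * odd_quotient 5 *
      inverse (qpoch 3 11) * inverse (qpoch 8 11)"
    by (simp add: qpoch_mult_inverse)
  finally show ?thesis .
qed

lemma fps_coeff_le_cancel_Jm_1:
  assumes "fps_coeff_le (Jm 1 * F) (Jm 1 * G)"
  shows "fps_coeff_le F G"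
proof -
  have "Jm 1 * inverse (Jm 1) = 1"
    unfolding Jm_def by (rule qpoch_mult_inverse) simp_all
  then have "G - F = inverse (Jm 1) * (Jm 1 * G - Jm 1 * F)"
    by (simp add: algebra_simps)
  then show ?thesis
    using assms fps_nonneg_inverse_Jm_1 by (simp add: fps_coeff_le_iff_nonneg fps_nonneg_mult)
qed

theorem proposition6p3:
  shows "fps_coeff_le (Jm 1 * bracket 0 1 0 0 0) (Jm 1 * bracket 0 0 1 0 0)
       \<and> fps_coeff_le (Jm 1 * bracket 0 0 1 0 0) (Jm 1 * bracket 0 0 0 1 0)
       \<and> fps_coeff_le (Jm 1 * bracket 0 0 0 1 0) (Jm 1 * bracket 0 0 0 0 1)
       \<and> fps_coeff_le (bracket 0 1 0 0 0) (bracket 0 0 1 0 0)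
       \<and> fps_coeff_le (bracket 0 0 1 0 0) (bracket 0 0 0 1 0)
       \<and> fps_coeff_le (bracket 0 0 0 1 0) (bracket 0 0 0 0 1)"
proof -
  have nonneg: "fps_nonneg (odd_quotient a)" "fps_nonneg (even_quotient a)"
    "fps_nonneg (inverse (qpoch a 11))" if "1 \<le> a" "a \<le> 10" for a
    using that by (simp_all add: fps_nonneg_odd_quotient fps_nonneg_even_quotient fps_nonneg_inverse_qpoch)
  have "fps_coeff_le (Jm 1 * bracket 0 1 0 0 0) (Jm 1 * bracket 0 0 1 0 0)"
    unfolding fps_coeff_le_iff_nonneg Jm_1_bracket_difference_23
    by (simp add: nonneg fps_nonneg_mult fps_nonneg_power)
  moreover have "fps_coeff_le (Jm 1 * bracket 0 0 1 0 0) (Jm 1 * bracket 0 0 0 1 0)"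
    unfolding fps_coeff_le_iff_nonneg Jm_1_bracket_difference_34
    by (simp add: nonneg fps_nonneg_mult fps_nonneg_power)
  moreover have "fps_coeff_le (Jm 1 * bracket 0 0 0 1 0) (Jm 1 * bracket 0 0 0 0 1)"
    unfolding fps_coeff_le_iff_nonneg Jm_1_bracket_difference_45
    by (simp add: nonneg fps_nonneg_mult fps_nonneg_power)
  ultimately show ?thesis
    by (blast intro: fps_coeff_le_cancel_Jm_1)
qed

end
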